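(* Let $K\ge 3$, $d_2,\dots,d_K\ge 2$ and $d_1=d_2\cdots d_K-1$. Then there is a bijection between the set of SLOCC equivalence classes of SLOCC maximal states in $\mathbb{C}^{d_1}\otimes\mathbb{C}^{d_2}\otimes\cdots\otimes\mathbb{C}^{d_K}$ and the set of SLOCC equivalence classes of nonzero states in $\mathbb{C}^{d_2}\otimes\cdots\otimes\mathbb{C}^{d_K}$. Explicitly, a maximal state $|\Phi\rangle=\sum_{i=1}^{d_1}|i\rangle|\phi_i\rangle$ (with $\{|i\rangle\}$ a basis of $\mathbb{C}^{d_1}$) is sent to the class of a nonzero vector spanning the one-dimensional space $\mathrm{span}\{|\phi_i\rangle\}^\perp\subset\mathbb{C}^{d_2}\otimes\cdots\otimes\mathbb{C}^{d_K}$.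
   Context: For a multipartite space $\mathbb{C}^{e_1}\otimes\cdots\otimes\mathbb{C}^{e_m}$ with parties the tensor factors, $|\psi\rangle\le_{\mathrm{SLOCC}}|\phi\rangle$ means $(L_1\otimes\cdots\otimes L_m)|\phi\rangle=|\psi\rangle$ for some linear operators $L_i$ on $\mathbb{C}^{e_i}$; two states are SLOCC equivalent if each is $\le_{\mathrm{SLOCC}}$ the other (equivalently, related by $L_1\otimes\cdots\otimes L_m$ with all $L_i$ invertible). A state $|\phi\rangle$ is SLOCC maximal if for every $|\psi\rangle$ in the space, $|\phi\rangle\le_{\mathrm{SLOCC}}|\psi\rangle$ implies $|\psi\rangle\le_{\mathrm{SLOCC}}|\phi\rangle$; maximal states are exactly those whose reduced density operators on every single factor have full rank, so in particular the $|\phi_i\rangle$ above are linearly independent. *)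

theory Defs
  imports Complex_Main
begin

text \<open>A state in C^{e_1} (x) ... (x) C^{e_m}, with dimension list ds = [e_1,...,e_m],
  is a function from index lists to complex coefficients, vanishing outside the index box.\<close>

type_synonym tensor = "nat list \<Rightarrow> complex"

definition idx :: "nat list \<Rightarrow> nat list set" where
  "idx ds = {is. length is = length ds \<and> (\<forall>j<length ds. is ! j < ds ! j)}"

definition states :: "nat list \<Rightarrow> tensor set" where
  "states ds = {\<psi>. \<forall>is. is \<notin> idx ds \<longrightarrow> \<psi> is = 0}"

text \<open>Apply the local operator L_1 (x) ... (x) L_m (each L_j given by its matrix entries).\<close>
definition loc_apply :: "(nat \<Rightarrow> nat \<Rightarrow> complex) list \<Rightarrow> nat list \<Rightarrow> tensor \<Rightarrow> tensor" where
  "loc_apply Ls ds \<phi> = (\<lambda>is. if is \<in> idx ds then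
      (\<Sum>js\<in>idx ds. (\<Prod>j<length ds. (Ls ! j) (is ! j) (js ! j)) * \<phi> js) else 0)"

definition slocc_le :: "nat list \<Rightarrow> tensor \<Rightarrow> tensor \<Rightarrow> bool" where
  "slocc_le ds \<psi> \<phi> \<longleftrightarrow> (\<exists>Ls. length Ls = length ds \<and> loc_apply Ls ds \<phi> = \<psi>)"

definition slocc_equiv :: "nat list \<Rightarrow> tensor \<Rightarrow> tensor \<Rightarrow> bool" where
  "slocc_equiv ds \<psi> \<phi> \<longleftrightarrow> slocc_le ds \<psi> \<phi> \<and> slocc_le ds \<phi> \<psi>"

definition slocc_maximal :: "nat list \<Rightarrow> tensor \<Rightarrow> bool" where
  "slocc_maximal ds \<phi> \<longleftrightarrow> \<phi> \<in> states ds \<and>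
     (\<forall>\<psi>\<in>states ds. slocc_le ds \<phi> \<psi> \<longrightarrow> slocc_le ds \<psi> \<phi>)"

definition slocc_class :: "nat list \<Rightarrow> tensor \<Rightarrow> tensor set" where
  "slocc_class ds \<phi> = {\<psi>\<in>states ds. slocc_equiv ds \<psi> \<phi>}"

end

theory Submission
  imports Defs "HOL-Library.Function_Algebras"
begin

(* Put H = C^{d_2} (x) ... (x) C^{d_K} (dimension N = d_2 ... d_K) and n = N - 1.
   A state Phi of C^n (x) H is described by its n slices Phi_i = Phi(i, _) in H, and a local
   operator A (x) B acts on slices by Phi_i |-> sum_k A_ik (B Phi_k).
   (1) Phi is SLOCC maximal iff its slices are n distinct, linearly independent vectors
       ("full slices"); they then span a hyperplane of H, which is the orthogonal complement
       of a nonzero psi, unique up to a scalar.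
   (2) If a local operator B = B_2 (x) ... (x) B_K on H has a range containing psi^perp for a
       nonzero psi, every factor B_j is invertible: otherwise a nonzero w orthogonal to the
       range of B_j, placed on any line of the index box in direction j, is orthogonal to the
       range of B, hence a multiple of psi; two parallel lines give vectors with disjoint
       supports, a contradiction (this uses K >= 3 and d_j >= 2).
   (3) Two SLOCC equivalent states are related by a local operator with invertible factors
       (each factor can be modified off the local support of the state).
   (4) For maximal Phi, Phi' with complements psi, psi': Phi ~ Phi' iff psi ~ psi'; in both
       directions one transports hyperplanes with adjoints of invertible local operators.
   The theorem then follows from an abstract fact: a relation between two sets that is total
   in both directions and compatible with two equivalences induces a bijection of classes. *)

section \<open>Complex-valued functions as a vector space\<close>

definition cscale :: "complex \<Rightarrow> ('a \<Rightarrow> complex) \<Rightarrow> 'a \<Rightarrow> complex" where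
  "cscale c f = (\<lambda>x. c * f x)"

global_interpretation VS: vector_space "cscale :: complex \<Rightarrow> ('a \<Rightarrow> complex) \<Rightarrow> 'a \<Rightarrow> complex"
  by unfold_locales (auto simp: cscale_def fun_eq_iff algebra_simps)

global_interpretation VP: vector_space_pair "cscale :: complex \<Rightarrow> ('a \<Rightarrow> complex) \<Rightarrow> 'a \<Rightarrow> complex"
   "cscale :: complex \<Rightarrow> ('b \<Rightarrow> complex) \<Rightarrow> 'b \<Rightarrow> complex"
  by unfold_locales

lemma cscale_apply[simp]: "cscale c f x = c * f x"
  by (simp add: cscale_def)

lemma sum_fun_apply: "(\<Sum>i\<in>S. f i) x = (\<Sum>i\<in>S. f i x)"
  by (induction S rule: infinite_finite_induct) auto

definition supported :: "'a set \<Rightarrow> ('a \<Rightarrow> complex) set" where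
  "supported I = {x. \<forall>i. i \<notin> I \<longrightarrow> x i = 0}"

definition unit_vec :: "'a \<Rightarrow> 'a \<Rightarrow> complex" where
  "unit_vec i = (\<lambda>j. if j = i then 1 else 0)"

definition inner_on :: "'a set \<Rightarrow> ('a \<Rightarrow> complex) \<Rightarrow> ('a \<Rightarrow> complex) \<Rightarrow> complex" where
  "inner_on I x y = (\<Sum>i\<in>I. cnj (x i) * y i)"

lemma subspace_supported: "VS.subspace (supported I)"
  by (auto simp: VS.subspace_def supported_def)

lemma supported_diff: "x \<in> supported I \<Longrightarrow> y \<in> supported I \<Longrightarrow> x - y \<in> supported I"
  by (auto simp: supported_def)

lemma supported_cscale: "x \<in> supported I \<Longrightarrow> cscale c x \<in> supported I"
  by (auto simp: supported_def)

lemma unit_vec_supported: "i \<in> I \<Longrightarrow> unit_vec i \<in> supported I"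
  by (auto simp: supported_def unit_vec_def)

lemma span_subset_supported: "S \<subseteq> supported I \<Longrightarrow> VS.span S \<subseteq> supported I"
  using subspace_supported VS.span_minimal by blast

lemma sum_supported: "(\<And>i. i \<in> K \<Longrightarrow> f i \<in> supported I) \<Longrightarrow> (\<Sum>i\<in>K. f i) \<in> supported I"
  using VS.subspace_sum[OF subspace_supported] by blast

lemma supported_unit_vec_expansion:
  assumes "finite I" "x \<in> supported I"
  shows "x = (\<Sum>i\<in>I. cscale (x i) (unit_vec i))"
proof
  fix j
  have "(\<Sum>i\<in>I. cscale (x i) (unit_vec i)) j = (\<Sum>i\<in>I. if i = j then x i else 0)"
    by (auto simp: sum_fun_apply unit_vec_def intro!: sum.cong)
  also have "\<dots> = x j" using assms by (simp add: supported_def)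
  finally show "x j = (\<Sum>i\<in>I. cscale (x i) (unit_vec i)) j" by simp
qed

lemma supported_eq_span_unit_vecs: "finite I \<Longrightarrow> supported I = VS.span (unit_vec ` I)"
proof
  assume I: "finite I"
  show "supported I \<subseteq> VS.span (unit_vec ` I)"
  proof
    fix x assume x: "x \<in> supported I"
    show "x \<in> VS.span (unit_vec ` I)"
      by (subst supported_unit_vec_expansion[OF I x])
         (intro VS.span_sum VS.span_scale VS.span_base, auto)
  qed
  show "VS.span (unit_vec ` I) \<subseteq> supported I"
    by (rule span_subset_supported) (auto intro: unit_vec_supported)
qed

lemma independent_unit_vecs: "VS.independent (unit_vec ` I)"
proof -
  have "unit_vec i \<notin> VS.span (unit_vec ` I - {unit_vec i})" for i
  proof
    assume a: "unit_vec i \<in> VS.span (unit_vec ` I - {unit_vec i})"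
    have "x \<in> VS.span (unit_vec ` I - {unit_vec i}) \<Longrightarrow> x i = 0" for x
    proof (induction rule: VS.span_induct)
      case (step x)
      then show ?case by (auto simp: unit_vec_def)
    next
      case base
      show ?case by (auto simp: VS.subspace_def)
    qed
    from this[OF a] show False by (simp add: unit_vec_def)
  qed
  then show ?thesis unfolding VS.dependent_def by blast
qed

lemma card_unit_vecs: "card (unit_vec ` I) = card I"
proof (rule card_image, rule inj_onI)
  fix i j assume "unit_vec i = unit_vec j"
  then show "i = j" by (metis unit_vec_def one_neq_zero)
qed

text \<open>Consequences of \<open>dim (supported I) = card I\<close>.\<close>

lemma independent_supported_card:
  assumes "finite I" "X \<subseteq> supported I" "VS.independent X"
  shows "finite X \<and> card X \<le> card I"
proof -
  have "X \<subseteq> VS.span (unit_vec ` I)" using assms supported_eq_span_unit_vecs by blast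
  from VS.independent_span_bound[OF finite_imageI[OF assms(1)] assms(3) this]
  show ?thesis using card_unit_vecs[of I] by simp
qed

lemma spanning_card_ge:
  assumes "finite I" "finite S" "supported I \<subseteq> VS.span S"
  shows "card I \<le> card S"
proof -
  have "unit_vec ` I \<subseteq> VS.span S"
    by (intro image_subsetI subsetD[OF assms(3)] unit_vec_supported)
  from VS.independent_span_bound[OF assms(2) independent_unit_vecs this]
  show ?thesis using card_unit_vecs[of I] by simp
qed

lemma basis_supported_card:
  assumes "finite I" "B \<subseteq> supported I" "VS.independent B" "supported I \<subseteq> VS.span B"
  shows "finite B \<and> card B = card I"
  using independent_supported_card[OF assms(1-3)] spanning_card_ge[OF assms(1) _ assms(4)] by auto

lemma independent_extend_card:
  assumes fI: "finite I" and b: "b \<subseteq> supported I" "VS.independent b"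
    and m: "card b \<le> m" "m \<le> card I"
  shows "\<exists>c. b \<subseteq> c \<and> c \<subseteq> supported I \<and> VS.independent c \<and> finite c \<and> card c = m"
proof -
  obtain B where B: "b \<subseteq> B" "B \<subseteq> supported I" "VS.independent B" "supported I \<subseteq> VS.span B"
    using VS.maximal_independent_subset_extend[OF b] by blast
  have fB: "finite B" "card B = card I" using basis_supported_card[OF fI B(2-4)] by auto
  have fb: "finite b" using B(1) fB(1) finite_subset by blast
  have "m - card b \<le> card (B - b)" using card_Diff_subset[OF fb B(1)] fB m by simp
  then obtain e where e: "e \<subseteq> B - b" "card e = m - card b" "finite e"
    by (rule obtain_subset_with_card_n)
  have "card (b \<union> e) = m" using card_Un_disjoint[OF fb e(3)] e(1,2) m(1) by auto
  moreover have "VS.independent (b \<union> e)" using VS.independent_mono[OF B(3)] B(1) e(1) by blast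
  ultimately show ?thesis using B(1,2) e fb by (intro exI[of _ "b \<union> e"]) auto
qed

lemma independent_card_spans:
  assumes "finite Y" "X \<subseteq> VS.span Y" "VS.independent X" "card Y \<le> card X"
  shows "Y \<subseteq> VS.span X"
proof
  fix y assume y: "y \<in> Y"
  show "y \<in> VS.span X"
  proof (rule ccontr)
    assume n: "y \<notin> VS.span X"
    have fX: "finite X" using VS.independent_span_bound assms by blast
    have "VS.independent (insert y X)" using n assms VS.independent_insertI by blast
    moreover have "insert y X \<subseteq> VS.span Y" using assms y VS.span_base by blast
    ultimately have "card (insert y X) \<le> card Y" using VS.independent_span_bound assms by blast
    moreover have "y \<notin> X" using n VS.span_base by blast
    then have "card (insert y X) = Suc (card X)" using fX by simp
    ultimately show False using assms by simp
  qed
qed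

lemma spanning_card_independent:
  assumes "finite C" "X \<subseteq> VS.span C" "VS.independent X" "card C \<le> card X"
  shows "VS.independent C"
proof -
  obtain b where b: "b \<subseteq> C" "VS.independent b" "C \<subseteq> VS.span b"
    using VS.maximal_independent_subset by blast
  have "VS.span C \<subseteq> VS.span b" using b(3) VS.span_minimal VS.subspace_span by blast
  then have "X \<subseteq> VS.span b" using assms(2) by blast
  moreover have fb: "finite b" using assms(1) b(1) finite_subset by blast
  ultimately have "card X \<le> card b" using VS.independent_span_bound[OF fb assms(3)] by simp
  then have "card b = card C" using card_mono[OF assms(1) b(1)] assms by linarith
  then have "b = C" using card_subset_eq assms(1) b(1) by blast
  then show ?thesis using b by simp
qed

lemma span_image_as_sum:
  assumes "x \<in> VS.span (f ` K)" "finite K"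
  shows "\<exists>a. x = (\<Sum>i\<in>K. cscale (a i) (f i))"
  using assms(1)
proof (induction rule: VS.span_induct)
  case (step x)
  then obtain k where k: "k \<in> K" "x = f k" by auto
  have "(\<Sum>i\<in>K. cscale (if i = k then 1 else 0) (f i)) = (\<Sum>i\<in>K. if i = k then f i else 0)"
    by (intro sum.cong) (auto simp: cscale_def zero_fun_def)
  also have "\<dots> = x" using k assms(2) by simp
  finally have "x = (\<Sum>i\<in>K. cscale (if i = k then 1 else 0) (f i))" by simp
  then show ?case by (rule exI[of _ "\<lambda>i. if i = k then 1 else 0"])
next
  case base
  show ?case
  proof (unfold VS.subspace_def, safe)
    show "\<exists>a. 0 = (\<Sum>i\<in>K. cscale (a i) (f i))"
      by (rule exI[of _ "\<lambda>_. 0"]) (simp add: cscale_def fun_eq_iff sum_fun_apply zero_fun_def)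
    fix a b
    show "\<exists>c. (\<Sum>i\<in>K. cscale (a i) (f i)) + (\<Sum>i\<in>K. cscale (b i) (f i)) = (\<Sum>i\<in>K. cscale (c i) (f i))"
      by (rule exI[of _ "\<lambda>i. a i + b i"]) (simp add: fun_eq_iff sum_fun_apply sum.distrib algebra_simps)
    fix c
    show "\<exists>b. cscale c (\<Sum>i\<in>K. cscale (a i) (f i)) = (\<Sum>i\<in>K. cscale (b i) (f i))"
      by (rule exI[of _ "\<lambda>i. c * a i"]) (simp add: fun_eq_iff sum_fun_apply sum_distrib_left algebra_simps)
  qed
qed

lemma linear_cscaleI:
  assumes "\<And>x y. f (x + y) = f x + f y" "\<And>c x. f (cscale c x) = cscale c (f x)"
  shows "Vector_Spaces.linear (cscale :: complex \<Rightarrow> ('a \<Rightarrow> complex) \<Rightarrow> 'a \<Rightarrow> complex)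
           (cscale :: complex \<Rightarrow> ('b \<Rightarrow> complex) \<Rightarrow> 'b \<Rightarrow> complex) f"
  by (simp add: Vector_Spaces.linear_iff assms VS.vector_space_axioms)

lemma inner_on_add_right: "inner_on I x (y + z) = inner_on I x y + inner_on I x z"
  by (simp add: inner_on_def algebra_simps sum.distrib)
lemma inner_on_diff_right: "inner_on I x (y - z) = inner_on I x y - inner_on I x z"
  by (simp add: inner_on_def algebra_simps sum_subtractf)
lemma inner_on_cscale_right: "inner_on I x (cscale c y) = c * inner_on I x y"
  by (simp add: inner_on_def algebra_simps sum_distrib_left)
lemma inner_on_add_left: "inner_on I (x + y) z = inner_on I x z + inner_on I y z"
  by (simp add: inner_on_def algebra_simps sum.distrib)
lemma inner_on_diff_left: "inner_on I (x - y) z = inner_on I x z - inner_on I y z"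
  by (simp add: inner_on_def algebra_simps sum_subtractf)
lemma inner_on_cscale_left: "inner_on I (cscale c x) y = cnj c * inner_on I x y"
  by (simp add: inner_on_def algebra_simps sum_distrib_left)

lemma inner_on_zero_left[simp]: "inner_on I 0 y = 0"
  by (simp add: inner_on_def)
lemma inner_on_zero_right[simp]: "inner_on I x 0 = 0"
  by (simp add: inner_on_def)

lemma inner_on_zero_sym: "inner_on I x y = 0 \<longleftrightarrow> inner_on I y x = 0"
proof -
  have "cnj (inner_on I x y) = inner_on I y x" by (simp add: inner_on_def mult.commute)
  then show ?thesis by (metis complex_cnj_zero_iff)
qed

lemma inner_on_self_eq_0:
  assumes "finite I" "x \<in> supported I" "inner_on I x x = 0"
  shows "x = 0"
proof -
  have "inner_on I x x = (\<Sum>i\<in>I. of_real ((cmod (x i))\<^sup>2))"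
    unfolding inner_on_def
    by (rule sum.cong) (simp_all add: mult.commute[of "cnj _"] complex_norm_square[symmetric])
  also have "\<dots> = of_real (\<Sum>i\<in>I. (cmod (x i))\<^sup>2)"
    by (simp only: of_real_sum)
  finally have "(\<Sum>i\<in>I. (cmod (x i))\<^sup>2) = 0" using assms(3) of_real_eq_0_iff by metis
  then have "\<forall>i\<in>I. (cmod (x i))\<^sup>2 = 0" by (subst (asm) sum_nonneg_eq_0_iff[OF assms(1)]) auto
  then have "\<forall>i\<in>I. x i = 0" by simp
  then show ?thesis using assms(2) by (auto simp: supported_def fun_eq_iff)
qed

lemma inner_on_span_left:
  assumes "\<forall>s\<in>S. inner_on I s y = 0" "x \<in> VS.span S"
  shows "inner_on I x y = 0"
  using assms(2)
proof (induction rule: VS.span_induct)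
  case (step x)
  then show ?case using assms(1) by auto
next
  case base
  show ?case by (auto simp: VS.subspace_def inner_on_add_left inner_on_cscale_left)
qed

section \<open>Square matrices\<close>

type_synonym mat = "nat \<Rightarrow> nat \<Rightarrow> complex"

text \<open>A \<open>d \<times> d\<close> matrix is a function \<open>nat \<Rightarrow> nat \<Rightarrow> complex\<close> of which only the entries
  below \<open>d\<close> matter; it acts on vectors supported on \<open>{..<d}\<close>.\<close>

definition id_mat :: mat where
  "id_mat a b = (if a = b then 1 else 0)"

definition mat_mul :: "nat \<Rightarrow> mat \<Rightarrow> mat \<Rightarrow> mat" where
  "mat_mul d L M = (\<lambda>a b. \<Sum>c<d. L a c * M c b)"

definition mat_vec :: "nat \<Rightarrow> mat \<Rightarrow> (nat \<Rightarrow> complex) \<Rightarrow> nat \<Rightarrow> complex" where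
  "mat_vec d M x = (\<lambda>a. if a < d then \<Sum>b<d. M a b * x b else 0)"

definition adj_mat :: "mat \<Rightarrow> mat" where
  "adj_mat L = (\<lambda>a b. cnj (L b a))"

lemma indicator_mult: "(if P then 1 else 0) * (y::complex) = (if P then y else 0)"
  by simp

lemma mult_indicator: "(y::complex) * (if P then 1 else 0) = (if P then y else 0)"
  by simp

lemma mat_mul_id_mat_left: "a < d \<Longrightarrow> mat_mul d id_mat M a b = M a b"
  by (simp add: mat_mul_def id_mat_def indicator_mult)

lemma mat_mul_id_mat_right: "b < d \<Longrightarrow> mat_mul d M id_mat a b = M a b"
  by (simp add: mat_mul_def id_mat_def mult_indicator)

lemma mat_mul_adj_mat: "mat_mul d (adj_mat N) (adj_mat R) a b = cnj (mat_mul d R N b a)"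
  by (simp add: mat_mul_def adj_mat_def mult.commute)

lemma id_mat_cnj: "cnj (id_mat b a) = id_mat a b"
  by (simp add: id_mat_def)

lemma mat_vec_supported: "mat_vec d M x \<in> supported {..<d}"
  by (simp add: mat_vec_def supported_def)

lemma mat_vec_linear: "Vector_Spaces.linear cscale cscale (mat_vec d M)"
  by (rule linear_cscaleI) (auto simp: mat_vec_def fun_eq_iff algebra_simps sum.distrib sum_distrib_left)

lemma mat_vec_cscale: "mat_vec d M (cscale c x) = cscale c (mat_vec d M x)"
  by (auto simp: mat_vec_def fun_eq_iff algebra_simps sum_distrib_left)

lemma mat_vec_mat_mul: "mat_vec d (mat_mul d M N) x = mat_vec d M (mat_vec d N x)"
proof
  fix a
  show "mat_vec d (mat_mul d M N) x a = mat_vec d M (mat_vec d N x) a"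
  proof (cases "a < d")
    case True
    have "(\<Sum>b<d. (\<Sum>c<d. M a c * N c b) * x b) = (\<Sum>c<d. M a c * (\<Sum>b<d. N c b * x b))"
      by (simp add: sum_distrib_left sum_distrib_right mult.assoc) (rule sum.swap)
    then show ?thesis using True by (simp add: mat_vec_def mat_mul_def cong: if_cong)
  qed (simp add: mat_vec_def)
qed

lemma mat_vec_id_mat: "x \<in> supported {..<d} \<Longrightarrow> mat_vec d id_mat x = x"
  by (auto simp: mat_vec_def id_mat_def supported_def fun_eq_iff indicator_mult)

lemma mat_vec_unit_vec: "b < d \<Longrightarrow> mat_vec d M (unit_vec b) = (\<lambda>a. if a < d then M a b else 0)"
  by (auto simp: mat_vec_def unit_vec_def fun_eq_iff mult_indicator)

lemma mat_vec_cong: "(\<And>a b. a < d \<Longrightarrow> b < d \<Longrightarrow> M a b = N a b) \<Longrightarrow> mat_vec d M = mat_vec d N"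
  by (auto simp: mat_vec_def fun_eq_iff intro!: sum.cong)

lemma mat_vec_sum_unit_vec:
  assumes x: "x \<in> supported {..<d}"
  shows "mat_vec d M x = (\<Sum>b<d. cscale (x b) (mat_vec d M (unit_vec b)))"
proof -
  have "mat_vec d M x = mat_vec d M (\<Sum>b<d. cscale (x b) (unit_vec b))"
    using supported_unit_vec_expansion[OF _ x] by simp
  also have "\<dots> = (\<Sum>b<d. cscale (x b) (mat_vec d M (unit_vec b)))"
    by (simp add: VP.linear_sum[OF mat_vec_linear] mat_vec_cscale)
  finally show ?thesis .
qed

text \<open>A surjective square matrix is injective: the images of the unit vectors span the whole
  \<open>d\<close>-dimensional space, hence are \<open>d\<close> distinct independent vectors.\<close>
lemma surj_mat_vec_inj_on:
  assumes surj: "\<And>e. e \<in> supported {..<d} \<Longrightarrow> \<exists>x\<in>supported {..<d}. mat_vec d M x = e"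
  shows "inj_on (mat_vec d M) (supported {..<d})"
proof -
  define E where "E = unit_vec ` {..<d}"
  define C where "C = mat_vec d M ` E"
  have fC: "finite C" and cE: "card E = d" using card_unit_vecs[of "{..<d}"] by (simp_all add: C_def E_def)
  have spanC: "supported {..<d} \<subseteq> VS.span C"
  proof
    fix e assume e: "e \<in> supported {..<d}"
    then obtain x where x: "x \<in> supported {..<d}" "mat_vec d M x = e" using surj by blast
    show "e \<in> VS.span C"
      unfolding x(2)[symmetric] mat_vec_sum_unit_vec[OF x(1)] C_def E_def
      by (intro VS.span_sum VS.span_scale VS.span_base) auto
  qed
  have "E \<subseteq> VS.span C" unfolding E_def
    by (intro image_subsetI subsetD[OF spanC] unit_vec_supported) simp
  moreover have "card C \<le> card E" unfolding C_def by (rule card_image_le) (simp add: E_def)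
  ultimately have indC: "VS.independent C"
    using spanning_card_independent[OF fC _ independent_unit_vecs] by (simp add: E_def)
  have "d \<le> card C" using spanning_card_ge[OF _ fC spanC] by simp
  then have "inj_on (mat_vec d M) E"
    using \<open>card C \<le> card E\<close> cE by (intro eq_card_imp_inj_on) (auto simp: C_def E_def)
  then have "inj_on (mat_vec d M) (VS.span E)"
    using VP.linear_inj_on_span_iff_independent_image[OF mat_vec_linear] indC by (simp add: C_def)
  then show ?thesis using supported_eq_span_unit_vecs[of "{..<d}"] by (simp add: E_def)
qed

abbreviation inverse_mats :: "nat \<Rightarrow> mat \<Rightarrow> mat \<Rightarrow> bool" where
  "inverse_mats d N R \<equiv> \<forall>a<d. \<forall>b<d. mat_mul d N R a b = id_mat a b \<and> mat_mul d R N a b = id_mat a b"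

lemma surj_mat_invertible:
  assumes surj: "\<And>e. e \<in> supported {..<d} \<Longrightarrow> \<exists>x\<in>supported {..<d}. mat_vec d M x = e"
  shows "\<exists>R. inverse_mats d M R"
proof -
  have "\<forall>b. \<exists>x. b < d \<longrightarrow> x \<in> supported {..<d} \<and> mat_vec d M x = unit_vec b"
    using surj unit_vec_supported by (metis lessThan_iff)
  then obtain X where X: "\<And>b. b < d \<Longrightarrow> X b \<in> supported {..<d} \<and> mat_vec d M (X b) = unit_vec b"
    by metis
  define R where "R = (\<lambda>a b. X b a)"
  have MR: "mat_mul d M R a b = id_mat a b" if "a < d" "b < d" for a b
  proof -
    have "mat_mul d M R a b = mat_vec d M (X b) a" using that by (simp add: mat_mul_def mat_vec_def R_def)
    also have "\<dots> = id_mat a b" using X[OF that(2)] by (simp add: unit_vec_def id_mat_def)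
    finally show ?thesis .
  qed
  have RM: "mat_mul d R M a b = id_mat a b" if "a < d" "b < d" for a b
  proof -
    have "mat_vec d (mat_mul d M R) = mat_vec d id_mat" by (rule mat_vec_cong) (simp add: MR)
    then have "mat_vec d M (mat_vec d R (mat_vec d M (unit_vec b))) = mat_vec d id_mat (mat_vec d M (unit_vec b))"
      by (metis mat_vec_mat_mul)
    also have "\<dots> = mat_vec d M (unit_vec b)" by (rule mat_vec_id_mat[OF mat_vec_supported])
    finally have "mat_vec d R (mat_vec d M (unit_vec b)) = unit_vec b"
      using inj_onD[OF surj_mat_vec_inj_on[OF surj]] mat_vec_supported that unit_vec_supported
      by (metis lessThan_iff)
    then have "mat_vec d (mat_mul d R M) (unit_vec b) a = unit_vec b a" by (simp add: mat_vec_mat_mul)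
    then have "mat_mul d R M a b = unit_vec b a" using that by (simp add: mat_vec_unit_vec)
    then show ?thesis by (simp add: unit_vec_def id_mat_def)
  qed
  show ?thesis using MR RM by blast
qed

section \<open>Index boxes and local operators\<close>

lemma idx_length: "is \<in> idx ds \<Longrightarrow> length is = length ds"
  by (simp add: idx_def)

lemma idx_nth: "is \<in> idx ds \<Longrightarrow> k < length ds \<Longrightarrow> is ! k < ds ! k"
  by (simp add: idx_def)

lemma idx_upd: "is \<in> idx ds \<Longrightarrow> a < ds ! j \<Longrightarrow> is[j := a] \<in> idx ds"
  by (cases "j < length is") (auto simp: idx_def nth_list_update)

lemma idx_Nil: "idx [] = {[]}"
  by (auto simp: idx_def)

lemma idx_Cons_iff: "(i # is) \<in> idx (d # ds) \<longleftrightarrow> i < d \<and> is \<in> idx ds"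
proof
  assume "(i # is) \<in> idx (d # ds)"
  then show "i < d \<and> is \<in> idx ds"
    unfolding idx_def by (auto simp: nth_Cons_Suc dest: spec[of _ 0] spec[of _ "Suc _"])
next
  assume "i < d \<and> is \<in> idx ds"
  then show "(i # is) \<in> idx (d # ds)"
    unfolding idx_def by (auto simp: nth_Cons split: nat.splits)
qed

lemma idx_Nil_notin: "[] \<notin> idx (d # ds)"
  by (simp add: idx_def)

lemma idx_Cons: "idx (d # ds) = (\<lambda>(a, js). a # js) ` ({..<d} \<times> idx ds)"
proof (rule set_eqI)
  fix v show "v \<in> idx (d # ds) \<longleftrightarrow> v \<in> (\<lambda>(a, js). a # js) ` ({..<d} \<times> idx ds)"
    by (cases v) (auto simp: idx_Cons_iff idx_Nil_notin)
qed

lemma inj_on_Cons_pair: "inj_on (\<lambda>(a, js). a # js) X"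
  by (auto simp: inj_on_def)

lemma finite_idx[simp]: "finite (idx ds)"
  by (induction ds) (auto simp: idx_Nil idx_Cons)

lemma card_idx: "card (idx ds) = prod_list ds"
proof (induction ds)
  case Nil then show ?case by (simp add: idx_Nil)
next
  case (Cons d ds)
  have "card (idx (d # ds)) = card ({..<d} \<times> idx ds)"
    unfolding idx_Cons by (rule card_image[OF inj_on_Cons_pair])
  also have "\<dots> = d * card (idx ds)" by (simp add: card_cartesian_product)
  finally show ?case using Cons by simp
qed

lemma states_supported: "states ds = supported (idx ds)"
  by (simp add: states_def supported_def)

lemma sum_idx_Cons: "(\<Sum>v\<in>idx (d # ds). f v) = (\<Sum>a<d. \<Sum>js\<in>idx ds. f (a # js))"
proof -
  have "(\<Sum>v\<in>idx (d # ds). f v) = (\<Sum>p\<in>{..<d} \<times> idx ds. f (case p of (a, js) \<Rightarrow> a # js))"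
    unfolding idx_Cons by (subst sum.reindex[OF inj_on_Cons_pair]) (simp add: comp_def)
  also have "(\<lambda>p. f (case p of (a, js) \<Rightarrow> a # js)) = (\<lambda>(a, js). f (a # js))"
    by (auto simp: fun_eq_iff split: prod.splits)
  also have "(\<Sum>p\<in>{..<d} \<times> idx ds. (\<lambda>(a, js). f (a # js)) p) = (\<Sum>a<d. \<Sum>js\<in>idx ds. f (a # js))"
    by (simp add: sum.cartesian_product)
  finally show ?thesis .
qed

lemma sum_idx_prod:
  fixes f :: "nat \<Rightarrow> nat \<Rightarrow> complex"
  shows "(\<Sum>ks\<in>idx ds. \<Prod>k<length ds. f k (ks ! k)) = (\<Prod>k<length ds. \<Sum>c<ds ! k. f k c)"
proof (induction ds arbitrary: f)
  case Nil then show ?case by (simp add: idx_Nil)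
next
  case (Cons d ds)
  have "(\<Sum>ks\<in>idx (d # ds). \<Prod>k<length (d # ds). f k (ks ! k))
      = (\<Sum>a<d. \<Sum>js\<in>idx ds. f 0 a * (\<Prod>k<length ds. f (Suc k) (js ! k)))"
    by (simp add: sum_idx_Cons prod.lessThan_Suc_shift del: prod.lessThan_Suc)
  also have "\<dots> = (\<Sum>a<d. f 0 a) * (\<Sum>js\<in>idx ds. \<Prod>k<length ds. f (Suc k) (js ! k))"
    by (subst sum_product) (rule refl)
  also have "\<dots> = (\<Sum>a<d. f 0 a) * (\<Prod>k<length ds. \<Sum>c<ds ! k. f (Suc k) c)"
    using Cons[of "\<lambda>k. f (Suc k)"] by simp
  also have "\<dots> = (\<Prod>k<length (d # ds). \<Sum>c<(d # ds) ! k. f k c)"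
    by (simp add: prod.lessThan_Suc_shift del: prod.lessThan_Suc)
  finally show ?case .
qed


lemma loc_out: "is \<notin> idx ds \<Longrightarrow> loc_apply Ls ds x is = 0"
  by (simp add: loc_apply_def)

lemma loc_in: "is \<in> idx ds \<Longrightarrow> loc_apply Ls ds x is =
   (\<Sum>js\<in>idx ds. (\<Prod>j<length ds. (Ls ! j) (is ! j) (js ! j)) * x js)"
  by (simp add: loc_apply_def)

lemma loc_states: "loc_apply Ls ds x \<in> states ds"
  by (simp add: states_def loc_out)

lemma loc_cong:
  assumes "\<And>k a b. k < length ds \<Longrightarrow> a < ds ! k \<Longrightarrow> b < ds ! k \<Longrightarrow> (Ls ! k) a b = (Ms ! k) a b"
  shows "loc_apply Ls ds = loc_apply Ms ds"
proof (intro ext)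
  fix x "is"
  show "loc_apply Ls ds x is = loc_apply Ms ds x is"
  proof (cases "is \<in> idx ds")
    case True
    show ?thesis unfolding loc_in[OF True]
      by (intro sum.cong prod.cong arg_cong2[where f="(*)"] refl assms)
         (auto simp: idx_nth True)
  qed (simp add: loc_out)
qed

definition mat_mul_list :: "nat list \<Rightarrow> mat list \<Rightarrow> mat list \<Rightarrow> mat list" where
  "mat_mul_list ds Ls Ms = map (\<lambda>k. mat_mul (ds ! k) (Ls ! k) (Ms ! k)) [0..<length ds]"

lemma length_mat_mul_list[simp]: "length (mat_mul_list ds Ls Ms) = length ds"
  by (simp add: mat_mul_list_def)

lemma nth_mat_mul_list: "k < length ds \<Longrightarrow> mat_mul_list ds Ls Ms ! k = mat_mul (ds ! k) (Ls ! k) (Ms ! k)"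
  by (simp add: mat_mul_list_def)

lemma loc_comp: "loc_apply Ls ds (loc_apply Ms ds x) = loc_apply (mat_mul_list ds Ls Ms) ds x"
proof (intro ext)
  fix "is"
  show "loc_apply Ls ds (loc_apply Ms ds x) is = loc_apply (mat_mul_list ds Ls Ms) ds x is"
  proof (cases "is \<in> idx ds")
    case True
    have "loc_apply Ls ds (loc_apply Ms ds x) is =
      (\<Sum>ks\<in>idx ds. (\<Prod>j<length ds. (Ls ! j) (is ! j) (ks ! j)) *
         (\<Sum>js\<in>idx ds. (\<Prod>j<length ds. (Ms ! j) (ks ! j) (js ! j)) * x js))"
      unfolding loc_in[OF True] by (intro sum.cong refl) (simp add: loc_in)
    also have "\<dots> = (\<Sum>ks\<in>idx ds. \<Sum>js\<in>idx ds.
         (\<Prod>j<length ds. (Ls ! j) (is ! j) (ks ! j) * (Ms ! j) (ks ! j) (js ! j)) * x js)"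
      by (simp add: sum_distrib_left prod.distrib mult.assoc)
    also have "\<dots> = (\<Sum>js\<in>idx ds. (\<Sum>ks\<in>idx ds.
         (\<Prod>j<length ds. (Ls ! j) (is ! j) (ks ! j) * (Ms ! j) (ks ! j) (js ! j))) * x js)"
      by (subst sum.swap) (simp add: sum_distrib_right)
    also have "\<dots> = (\<Sum>js\<in>idx ds. (\<Prod>j<length ds. \<Sum>c<ds ! j. (Ls ! j) (is ! j) c * (Ms ! j) c (js ! j)) * x js)"
    proof (intro sum.cong refl arg_cong2[where f="(*)"])
      fix js
      show "(\<Sum>ks\<in>idx ds. \<Prod>j<length ds. (Ls ! j) (is ! j) (ks ! j) * (Ms ! j) (ks ! j) (js ! j)) =
         (\<Prod>j<length ds. \<Sum>c<ds ! j. (Ls ! j) (is ! j) c * (Ms ! j) c (js ! j))"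
        using sum_idx_prod[where ds=ds and f="\<lambda>j c. (Ls ! j) (is ! j) c * (Ms ! j) c (js ! j)"] by simp
    qed
    also have "\<dots> = loc_apply (mat_mul_list ds Ls Ms) ds x is"
      unfolding loc_in[OF True] by (intro sum.cong refl arg_cong2[where f="(*)"] prod.cong) (simp_all add: nth_mat_mul_list mat_mul_def)
    finally show ?thesis .
  qed (simp add: loc_out)
qed

definition id_ops :: "nat \<Rightarrow> mat list" where
  "id_ops m = replicate m id_mat"

lemma prod_id_mat_idx: assumes "is \<in> idx ds" "js \<in> idx ds"
  shows "(\<Prod>j<length ds. id_mat (is ! j) (js ! j)) = (if is = js then 1 else 0)"
proof (cases "is = js")
  case True then show ?thesis by (simp add: id_mat_def)
next
  case False
  then obtain k where k: "k < length ds" "is ! k \<noteq> js ! k"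
    using assms idx_length nth_equalityI by metis
  then have "id_mat (is ! k) (js ! k) = 0" by (simp add: id_mat_def)
  then show ?thesis using False k by (metis finite_lessThan lessThan_iff prod_zero_iff)
qed

lemma loc_id_ops: assumes "x \<in> states ds" shows "loc_apply (id_ops (length ds)) ds x = x"
proof (intro ext)
  fix "is"
  show "loc_apply (id_ops (length ds)) ds x is = x is"
  proof (cases "is \<in> idx ds")
    case True
    have "loc_apply (id_ops (length ds)) ds x is = (\<Sum>js\<in>idx ds. (if is = js then 1 else 0) * x js)"
      unfolding loc_in[OF True]
      by (intro sum.cong refl) (simp add: id_ops_def prod_id_mat_idx[OF True])
    also have "\<dots> = x is" using True by (simp add: indicator_mult)
    finally show ?thesis .
  next
    case False then show ?thesis using assms by (simp add: loc_out states_def)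
  qed
qed

lemma length_id_ops[simp]: "length (id_ops m) = m" by (simp add: id_ops_def)
lemma nth_id_ops[simp]: "k < m \<Longrightarrow> id_ops m ! k = id_mat" by (simp add: id_ops_def)

lemma loc_add: "loc_apply Ls ds (x + y) = loc_apply Ls ds x + loc_apply Ls ds y"
  by (auto simp: loc_apply_def fun_eq_iff algebra_simps sum.distrib)

lemma loc_cscale: "loc_apply Ls ds (cscale c x) = cscale c (loc_apply Ls ds x)"
  by (auto simp: loc_apply_def fun_eq_iff algebra_simps sum_distrib_left)

lemma loc_linear: "Vector_Spaces.linear cscale cscale (loc_apply Ls ds)"
  by (rule linear_cscaleI) (simp_all add: loc_add loc_cscale)

definition adj_ops :: "mat list \<Rightarrow> mat list" where
  "adj_ops Ls = map adj_mat Ls"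

lemma adj_ops_adj_ops[simp]: "adj_ops (adj_ops Ls) = Ls"
  by (simp add: adj_ops_def adj_mat_def comp_def)
lemma length_adj_ops[simp]: "length (adj_ops Ls) = length Ls" by (simp add: adj_ops_def)

lemma loc_adj: assumes "length Ls = length ds"
  shows "inner_on (idx ds) y (loc_apply Ls ds x) = inner_on (idx ds) (loc_apply (adj_ops Ls) ds y) x"
proof -
  have "inner_on (idx ds) y (loc_apply Ls ds x) =
     (\<Sum>is\<in>idx ds. \<Sum>js\<in>idx ds. cnj (y is) * (\<Prod>j<length ds. (Ls ! j) (is ! j) (js ! j)) * x js)"
    unfolding inner_on_def by (intro sum.cong refl) (simp add: loc_in sum_distrib_left mult.assoc)
  also have "\<dots> = (\<Sum>js\<in>idx ds. \<Sum>is\<in>idx ds. cnj (y is) * (\<Prod>j<length ds. (Ls ! j) (is ! j) (js ! j)) * x js)"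
    by (rule sum.swap)
  also have "\<dots> = inner_on (idx ds) (loc_apply (adj_ops Ls) ds y) x"
    unfolding inner_on_def
    by (intro sum.cong refl) (simp add: loc_in sum_distrib_right sum_distrib_left adj_ops_def adj_mat_def assms mult_ac)
  finally show ?thesis .
qed

lemma loc_scale_first:
  assumes "length Ls = length ds" "0 < length ds"
  shows "loc_apply (Ls[0 := (\<lambda>a b. c * (Ls ! 0) a b)]) ds x = cscale c (loc_apply Ls ds x)"
proof (intro ext)
  fix "is"
  show "loc_apply (Ls[0 := (\<lambda>a b. c * (Ls ! 0) a b)]) ds x is = cscale c (loc_apply Ls ds x) is"
  proof (cases "is \<in> idx ds")
    case True
    obtain m where m: "length ds = Suc m" using assms(2) by (cases "length ds") auto
    have "\<And>js. (\<Prod>j<length ds. (Ls[0 := (\<lambda>a b. c * (Ls ! 0) a b)] ! j) (is ! j) (js ! j))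
        = c * (\<Prod>j<length ds. (Ls ! j) (is ! j) (js ! j))"
      unfolding m using assms m by (simp add: prod.lessThan_Suc_shift mult.assoc del: prod.lessThan_Suc)
    then show ?thesis unfolding cscale_apply loc_in[OF True]
      by (simp add: sum_distrib_left mult.assoc)
  qed (simp add: loc_out)
qed

lemma loc_inv:
  assumes "\<And>j a b. j < length ds \<Longrightarrow> a < ds ! j \<Longrightarrow> b < ds ! j \<Longrightarrow> mat_mul (ds ! j) (Bs ! j) (Rs ! j) a b = id_mat a b"
    and x: "x \<in> states ds"
  shows "loc_apply Bs ds (loc_apply Rs ds x) = x"
proof -
  have "loc_apply (mat_mul_list ds Bs Rs) ds = loc_apply (id_ops (length ds)) ds"
    by (rule loc_cong) (simp add: nth_mat_mul_list assms(1))
  then show ?thesis using loc_comp loc_id_ops[OF x] by metis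
qed

section \<open>Orthogonal complements\<close>

text \<open>Fewer than \<open>card I\<close> vectors have a common nonzero orthogonal vector: otherwise the map
  sending \<open>x\<close> to its inner products with the elements of \<open>S\<close> would embed a
  \<open>card I\<close>-dimensional space into a smaller one.\<close>
lemma nonzero_orthogonal_exists:
  assumes fI: "finite I" and S: "S \<subseteq> supported I" and fS: "finite S" and lt: "card S < card I"
  shows "\<exists>w\<in>supported I. w \<noteq> 0 \<and> (\<forall>s\<in>S. inner_on I s w = 0)"
proof (rule ccontr)
  assume no: "\<not> (\<exists>w\<in>supported I. w \<noteq> 0 \<and> (\<forall>s\<in>S. inner_on I s w = 0))"
  define g where "g x = (\<lambda>s. if s \<in> S then inner_on I s x else 0)" for x
  have lin: "Vector_Spaces.linear cscale cscale g"
    by (rule linear_cscaleI) (auto simp: g_def fun_eq_iff inner_on_add_right inner_on_cscale_right)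
  have sp: "VS.span (unit_vec ` I) = supported I" using supported_eq_span_unit_vecs[OF fI] by simp
  have "inj_on g (supported I)"
  proof (subst VP.linear_inj_on_iff_eq_0[OF lin subspace_supported], intro ballI impI)
    fix x assume x: "x \<in> supported I" "g x = 0"
    have "\<forall>s\<in>S. inner_on I s x = 0"
    proof
      fix s assume s: "s \<in> S"
      from fun_cong[OF x(2), of s] show "inner_on I s x = 0" using s by (simp add: g_def)
    qed
    then show "x = 0" using no x by blast
  qed
  then have inj: "inj_on g (VS.span (unit_vec ` I))" using sp by simp
  have ind: "VS.independent (g ` unit_vec ` I)"
    by (rule VP.linear_independent_injective_image[OF lin independent_unit_vecs inj])
  have sub: "g ` unit_vec ` I \<subseteq> supported S" by (auto simp: g_def supported_def)
  have "card (g ` unit_vec ` I) \<le> card S" using independent_supported_card[OF fS sub ind] by simp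
  moreover have "card (g ` unit_vec ` I) = card I"
  proof -
    have "inj_on g (unit_vec ` I)" using inj VS.span_superset inj_on_subset by blast
    then show ?thesis using card_image card_unit_vecs by metis
  qed
  ultimately show False using lt by simp
qed

lemma nonzero_orthogonal_to_nonspanning:
  assumes fI: "finite I" and S: "S \<subseteq> supported I" and fS: "finite S" and e: "e \<in> supported I" "e \<notin> VS.span S"
  shows "\<exists>w\<in>supported I. w \<noteq> 0 \<and> (\<forall>s\<in>S. inner_on I s w = 0)"
proof -
  obtain b where b: "b \<subseteq> S" "VS.independent b" "S \<subseteq> VS.span b"
    using VS.maximal_independent_subset by blast
  have fb: "finite b" using fS b(1) finite_subset by blast
  have bs: "b \<subseteq> supported I" using b(1) S by blast
  have "card b < card I"
  proof (rule ccontr)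
    assume "\<not> card b < card I"
    then have "card (unit_vec ` I) \<le> card b" using card_unit_vecs[of I] by simp
    moreover have "b \<subseteq> VS.span (unit_vec ` I)" using bs supported_eq_span_unit_vecs[OF fI] by simp
    ultimately have "unit_vec ` I \<subseteq> VS.span b" using independent_card_spans[OF finite_imageI[OF fI] _ b(2)] by blast
    then have "VS.span (unit_vec ` I) \<subseteq> VS.span b" using VS.span_minimal VS.subspace_span by blast
    also have "\<dots> \<subseteq> VS.span S" using b(1) VS.span_mono by blast
    finally show False using e supported_eq_span_unit_vecs[OF fI] by blast
  qed
  from nonzero_orthogonal_exists[OF fI bs fb this] obtain w where w: "w \<in> supported I" "w \<noteq> 0" "\<forall>s\<in>b. inner_on I s w = 0"
    by blast
  have "\<forall>s\<in>S. inner_on I s w = 0" using inner_on_span_left[OF w(3)] b(3) by blast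
  then show ?thesis using w by blast
qed

lemma orthogonal_to_complement_multiple:
  assumes fI: "finite I" and psi: "\<psi> \<in> supported I" "\<psi> \<noteq> 0" and z: "z \<in> supported I"
    and H: "\<And>y. y \<in> supported I \<Longrightarrow> inner_on I \<psi> y = 0 \<Longrightarrow> inner_on I z y = 0"
  shows "z = cscale (inner_on I \<psi> z / inner_on I \<psi> \<psi>) \<psi>"
proof -
  define c where "c = inner_on I \<psi> z / inner_on I \<psi> \<psi>"
  have nz: "inner_on I \<psi> \<psi> \<noteq> 0" using inner_on_self_eq_0[OF fI psi(1)] psi(2) by blast
  define y where "y = z - cscale c \<psi>"
  have ys: "y \<in> supported I" unfolding y_def using supported_diff[OF z supported_cscale[OF psi(1)]] .
  have "inner_on I \<psi> y = 0" unfolding y_def c_def using nz by (simp add: inner_on_diff_right inner_on_cscale_right)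
  then have "inner_on I z y = 0" using H[OF ys] by simp
  moreover have "inner_on I (z - cscale c \<psi>) t = inner_on I z t - cnj c * inner_on I \<psi> t" for t
    by (simp add: inner_on_diff_left inner_on_cscale_left)
  ultimately have "inner_on I y y = 0" using \<open>inner_on I \<psi> y = 0\<close> unfolding y_def by simp
  then have "y = 0" using inner_on_self_eq_0[OF fI ys] by blast
  then show ?thesis unfolding y_def c_def by simp
qed

lemma orthogonal_complement_basis:
  assumes fI: "finite I" and psi: "\<psi> \<in> supported I" "\<psi> \<noteq> 0"
  shows "\<exists>b. b \<subseteq> supported I \<and> VS.independent b \<and> finite b \<and> Suc (card b) = card I \<and>
             (\<forall>s\<in>b. inner_on I \<psi> s = 0)"
proof -
  define H where "H = {y \<in> supported I. inner_on I \<psi> y = 0}"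
  have subH: "VS.subspace H" unfolding H_def VS.subspace_def
    by (auto simp: supported_def inner_on_add_right inner_on_cscale_right)
  obtain b where b: "b \<subseteq> H" "VS.independent b" "H \<subseteq> VS.span b"
    using VS.maximal_independent_subset by blast
  have bsup: "b \<subseteq> supported I" using b(1) H_def by blast
  have nz: "inner_on I \<psi> \<psi> \<noteq> 0" using inner_on_self_eq_0[OF fI psi(1)] psi(2) by blast
  have psb: "\<psi> \<notin> VS.span b" using VS.span_minimal[OF b(1) subH] nz H_def by blast
  then have pnb: "\<psi> \<notin> b" using VS.span_base by blast
  have ind2: "VS.independent (insert \<psi> b)" using VS.independent_insertI[OF psb b(2)] .
  have spanall: "supported I \<subseteq> VS.span (insert \<psi> b)"
  proof
    fix x assume x: "x \<in> supported I"
    define c where "c = inner_on I \<psi> x / inner_on I \<psi> \<psi>"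
    have "x - cscale c \<psi> \<in> H" unfolding H_def c_def using nz x psi(1)
      by (simp add: inner_on_diff_right inner_on_cscale_right supported_diff supported_cscale)
    then have "x - cscale c \<psi> \<in> VS.span (insert \<psi> b)" using b(3) VS.span_mono[of b "insert \<psi> b"] by blast
    moreover have "cscale c \<psi> \<in> VS.span (insert \<psi> b)" by (intro VS.span_scale VS.span_base) simp
    ultimately have "(x - cscale c \<psi>) + cscale c \<psi> \<in> VS.span (insert \<psi> b)" by (rule VS.span_add)
    then show "x \<in> VS.span (insert \<psi> b)" by simp
  qed
  have "insert \<psi> b \<subseteq> supported I" using bsup psi(1) by blast
  from basis_supported_card[OF fI this ind2 spanall]
  have "finite (insert \<psi> b) \<and> card (insert \<psi> b) = card I" .
  then have "finite b" "Suc (card b) = card I" using pnb by auto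
  then show ?thesis using bsup b(1,2) H_def by blast
qed

section \<open>The action of a single party\<close>

text \<open>The operator acting by \<open>G\<close> on party \<open>j\<close> and trivially elsewhere is
  \<open>(id_ops (length ds))[j := G]\<close>. It acts on each \<open>j\<close>-fibre of a tensor (the vector obtained by
  varying the \<open>j\<close>-th index only) as the matrix \<open>G\<close>.\<close>

lemma sum_idx_line:
  assumes r: "r \<in> idx ds" and j: "j < length ds"
    and f0: "\<And>is. is \<in> idx ds \<Longrightarrow> f is \<noteq> 0 \<Longrightarrow> (\<forall>k<length ds. k \<noteq> j \<longrightarrow> is ! k = r ! k)"
  shows "(\<Sum>is\<in>idx ds. f is) = (\<Sum>a<ds ! j. f (r[j := a]))"
proof -
  let ?T = "(\<lambda>a. r[j := a]) ` {..<ds ! j}"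
  have T: "?T \<subseteq> idx ds" using idx_upd[OF r] by auto
  have lr: "length r = length ds" using r idx_length by blast
  have "(\<Sum>is\<in>idx ds. f is) = (\<Sum>is\<in>?T. f is)"
  proof (rule sum.mono_neutral_right[OF finite_idx T], rule ballI)
    fix "is" assume hi: "is \<in> idx ds - ?T"
    show "f is = 0"
    proof (rule ccontr)
      assume "f is \<noteq> 0"
      then have agree: "\<forall>k<length ds. k \<noteq> j \<longrightarrow> is ! k = r ! k" using f0 hi by blast
      have li: "length is = length ds" using hi idx_length by blast
      have "is = r[j := is ! j]"
        by (rule nth_equalityI) (use li lr agree j in \<open>auto simp: nth_list_update\<close>)
      moreover have "is ! j < ds ! j" using hi j idx_nth by blast
      ultimately have "is \<in> ?T" by blast
      then show False using hi by blast
    qed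
  qed
  also have "\<dots> = (\<Sum>a<ds ! j. f (r[j := a]))"
  proof (rule sum.reindex[unfolded comp_def])
    show "inj_on (\<lambda>a. r[j := a]) {..<ds ! j}"
      by (rule inj_onI) (metis j lr nth_list_update_eq)
  qed
  finally show ?thesis .
qed

lemma loc_single_party:
  assumes hi: "is \<in> idx ds" and j: "j < length ds"
  shows "loc_apply ((id_ops (length ds))[j := G]) ds x is = (\<Sum>a<ds ! j. G (is ! j) a * x (is[j := a]))"
proof -
  let ?L = "(id_ops (length ds))[j := G]"
  have li: "length is = length ds" using hi idx_length by blast
  have nthL: "?L ! k = (if k = j then G else id_mat)" if "k < length ds" for k
    using that j by (simp add: nth_list_update)
  have "loc_apply ?L ds x is = (\<Sum>js\<in>idx ds. (\<Prod>k<length ds. (?L ! k) (is ! k) (js ! k)) * x js)"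
    by (rule loc_in[OF hi])
  also have "\<dots> = (\<Sum>a<ds ! j. (\<Prod>k<length ds. (?L ! k) (is ! k) ((is[j := a]) ! k)) * x (is[j := a]))"
  proof (rule sum_idx_line[OF hi j])
    fix js assume js: "js \<in> idx ds" and nz: "(\<Prod>k<length ds. (?L ! k) (is ! k) (js ! k)) * x js \<noteq> 0"
    show "\<forall>k<length ds. k \<noteq> j \<longrightarrow> js ! k = is ! k"
    proof (intro allI impI)
      fix k assume k: "k < length ds" "k \<noteq> j"
      have "(\<Prod>k<length ds. (?L ! k) (is ! k) (js ! k)) \<noteq> 0" using nz by auto
      then have "(?L ! k) (is ! k) (js ! k) \<noteq> 0" using k(1) by (simp add: prod_zero_iff)
      then show "js ! k = is ! k" using k nthL[OF k(1)] by (simp add: id_mat_def split: if_splits)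
    qed
  qed
  also have "\<dots> = (\<Sum>a<ds ! j. G (is ! j) a * x (is[j := a]))"
  proof (rule sum.cong[OF refl])
    fix a assume a: "a \<in> {..<ds ! j}"
    have "(\<Prod>k<length ds. (?L ! k) (is ! k) ((is[j := a]) ! k)) = (\<Prod>k<length ds. if k = j then G (is ! j) a else 1)"
      by (rule prod.cong[OF refl]) (use j li nthL in \<open>auto simp: nth_list_update id_mat_def\<close>)
    also have "\<dots> = G (is ! j) a" using j by simp
    finally show "(\<Prod>k<length ds. (?L ! k) (is ! k) ((is[j := a]) ! k)) * x (is[j := a]) = G (is ! j) a * x (is[j := a])"
      by simp
  qed
  finally show ?thesis .
qed

definition fibre :: "nat list \<Rightarrow> nat \<Rightarrow> tensor \<Rightarrow> nat list \<Rightarrow> nat \<Rightarrow> complex" where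
  "fibre ds j x r = (\<lambda>a. if a < ds ! j then x (r[j := a]) else 0)"

lemma fibre_supported: "fibre ds j x r \<in> supported {..<ds ! j}"
  by (simp add: fibre_def supported_def)

lemma loc_single_party_mat_vec:
  assumes hi: "is \<in> idx ds" and j: "j < length ds"
  shows "loc_apply ((id_ops (length ds))[j := G]) ds x is = mat_vec (ds ! j) G (fibre ds j x is) (is ! j)"
  unfolding loc_single_party[OF hi j] using idx_nth[OF hi j] by (simp add: mat_vec_def fibre_def)

lemma fibre_loc_single_party:
  assumes r: "r \<in> idx ds" and j: "j < length ds"
  shows "fibre ds j (loc_apply ((id_ops (length ds))[j := G]) ds x) r = mat_vec (ds ! j) G (fibre ds j x r)"
proof
  fix a
  have lr: "length r = length ds" using r idx_length by blast
  show "fibre ds j (loc_apply ((id_ops (length ds))[j := G]) ds x) r a = mat_vec (ds ! j) G (fibre ds j x r) a"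
  proof (cases "a < ds ! j")
    case True
    have ra: "r[j := a] \<in> idx ds" using idx_upd[OF r True] .
    show ?thesis using True unfolding fibre_def mat_vec_def
      by (simp add: loc_single_party[OF ra j] lr j)
  qed (simp add: fibre_def mat_vec_def)
qed

lemma loc_factor_party_last:
  assumes len: "length Ls = length ds" and j: "j < length ds"
  shows "loc_apply Ls ds x = loc_apply ((id_ops (length ds))[j := Ls ! j]) ds (loc_apply (Ls[j := id_mat]) ds x)"
proof -
  have "loc_apply (mat_mul_list ds ((id_ops (length ds))[j := Ls ! j]) (Ls[j := id_mat])) ds = loc_apply Ls ds"
  proof (rule loc_cong)
    fix k a b assume k: "k < length ds" and ab: "a < ds ! k" "b < ds ! k"
    show "(mat_mul_list ds ((id_ops (length ds))[j := Ls ! j]) (Ls[j := id_mat]) ! k) a b = (Ls ! k) a b"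
      using k ab j len by (cases "k = j") (simp_all add: nth_mat_mul_list mat_mul_id_mat_left mat_mul_id_mat_right)
  qed
  then show ?thesis by (simp add: loc_comp)
qed

lemma loc_factor_party_first:
  assumes len: "length Ls = length ds" and j: "j < length ds"
  shows "loc_apply Ls ds x = loc_apply (Ls[j := id_mat]) ds (loc_apply ((id_ops (length ds))[j := Ls ! j]) ds x)"
proof -
  have "loc_apply (mat_mul_list ds (Ls[j := id_mat]) ((id_ops (length ds))[j := Ls ! j])) ds = loc_apply Ls ds"
  proof (rule loc_cong)
    fix k a b assume k: "k < length ds" and ab: "a < ds ! k" "b < ds ! k"
    show "(mat_mul_list ds (Ls[j := id_mat]) ((id_ops (length ds))[j := Ls ! j]) ! k) a b = (Ls ! k) a b"
      using k ab j len by (cases "k = j") (simp_all add: nth_mat_mul_list mat_mul_id_mat_left mat_mul_id_mat_right)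
  qed
  then show ?thesis by (simp add: loc_comp)
qed

lemma sum_idx_fixed_party:
  assumes j: "j < length ds" and a: "a < ds ! j"
  shows "(\<Sum>js\<in>{js \<in> idx ds. js ! j = a}. f js) = (\<Sum>t\<in>{t \<in> idx ds. t ! j = 0}. f (t[j := a]))"
proof -
  let ?I0 = "{t \<in> idx ds. t ! j = 0}"
  have eq: "{js \<in> idx ds. js ! j = a} = (\<lambda>t. t[j := a]) ` ?I0"
  proof (rule set_eqI, rule iffI)
    fix js assume js: "js \<in> {js \<in> idx ds. js ! j = a}"
    then have "js[j := 0] \<in> ?I0" using a idx_upd[of js ds 0 j] idx_length[of js ds] j by auto
    moreover have "js = (js[j := 0])[j := a]"
      using js by (metis (mono_tags, lifting) list_update_id list_update_overwrite mem_Collect_eq)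
    ultimately show "js \<in> (\<lambda>t. t[j := a]) ` ?I0" by blast
  next
    fix js assume "js \<in> (\<lambda>t. t[j := a]) ` ?I0"
    then show "js \<in> {js \<in> idx ds. js ! j = a}"
      using idx_upd[of _ ds a j] a idx_length[of _ ds] j by auto
  qed
  have "inj_on (\<lambda>t. t[j := a]) ?I0"
  proof (rule inj_onI)
    fix t t' assume "t \<in> ?I0" "t' \<in> ?I0" "t[j := a] = t'[j := a]"
    then show "t = t'" by (metis (mono_tags, lifting) list_update_id list_update_overwrite mem_Collect_eq)
  qed
  then show ?thesis unfolding eq by (rule sum.reindex[unfolded comp_def])
qed

lemma fibre_loc_span:
  assumes len: "length Ls = length ds" and j: "j < length ds" and Lj: "Ls ! j = id_mat" and r: "r \<in> idx ds"
  shows "fibre ds j (loc_apply Ls ds x) r \<in> VS.span (fibre ds j x ` idx ds)"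
proof -
  define I0 where "I0 = {t \<in> idx ds. t ! j = 0}"
  define w where "w t = (\<Prod>k\<in>{..<length ds} - {j}. (Ls ! k) (r ! k) (t ! k))" for t
  have lr: "length r = length ds" using r idx_length by blast
  have eq: "fibre ds j (loc_apply Ls ds x) r = (\<Sum>t\<in>I0. cscale (w t) (fibre ds j x t))"
  proof
    fix a
    show "fibre ds j (loc_apply Ls ds x) r a = (\<Sum>t\<in>I0. cscale (w t) (fibre ds j x t)) a"
    proof (cases "a < ds ! j")
      case False then show ?thesis by (simp add: fibre_def sum_fun_apply)
    next
      case True
      have ra: "r[j := a] \<in> idx ds" using idx_upd[OF r True] .
      have split: "(\<Prod>k<length ds. (Ls ! k) (r[j := a] ! k) (js ! k)) = (if js ! j = a then w js else 0)" for js
      proof -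
        have "(\<Prod>k<length ds. (Ls ! k) (r[j := a] ! k) (js ! k)) =
          (Ls ! j) (r[j := a] ! j) (js ! j) * (\<Prod>k\<in>{..<length ds} - {j}. (Ls ! k) (r[j := a] ! k) (js ! k))"
          using j by (subst prod.remove[of _ j]) auto
        also have "(\<Prod>k\<in>{..<length ds} - {j}. (Ls ! k) (r[j := a] ! k) (js ! k)) = w js"
          unfolding w_def by (rule prod.cong) auto
        finally show ?thesis using Lj lr j by (auto simp: id_mat_def)
      qed
      have "fibre ds j (loc_apply Ls ds x) r a = (\<Sum>js\<in>idx ds. (if js ! j = a then w js else 0) * x js)"
        using True unfolding fibre_def by (simp add: loc_in[OF ra] split)
      also have "\<dots> = (\<Sum>js\<in>{js \<in> idx ds. js ! j = a}. w js * x js)"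
        by (subst sum.inter_filter) (auto intro!: sum.cong)
      also have "\<dots> = (\<Sum>t\<in>I0. w (t[j := a]) * x (t[j := a]))"
        unfolding I0_def by (rule sum_idx_fixed_party[OF j True])
      also have "\<dots> = (\<Sum>t\<in>I0. w t * x (t[j := a]))"
        unfolding w_def by (intro sum.cong refl arg_cong2[where f="(*)"] prod.cong) auto
      also have "\<dots> = (\<Sum>t\<in>I0. cscale (w t) (fibre ds j x t)) a"
        using True by (simp add: sum_fun_apply fibre_def)
      finally show ?thesis .
    qed
  qed
  show ?thesis unfolding eq
    by (intro VS.span_sum VS.span_scale VS.span_base) (auto simp: I0_def)
qed

lemma fibre_loc_span_image:
  assumes len: "length Ms = length ds" and j: "j < length ds" and r: "r \<in> idx ds"
  shows "fibre ds j (loc_apply Ms ds x) r \<in> VS.span (mat_vec (ds ! j) (Ms ! j) ` fibre ds j x ` idx ds)"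
proof -
  have "fibre ds j (loc_apply Ms ds x) r = mat_vec (ds ! j) (Ms ! j) (fibre ds j (loc_apply (Ms[j := id_mat]) ds x) r)"
    by (subst loc_factor_party_last[OF len j]) (rule fibre_loc_single_party[OF r j])
  moreover have "fibre ds j (loc_apply (Ms[j := id_mat]) ds x) r \<in> VS.span (fibre ds j x ` idx ds)"
    by (rule fibre_loc_span) (use len j r in auto)
  ultimately show ?thesis using VP.linear_span_image[OF mat_vec_linear] by blast
qed

lemma loc_replace_factor:
  assumes len: "length Ls = length ds" and j: "j < length ds"
    and eq: "\<And>r. r \<in> idx ds \<Longrightarrow> mat_vec (ds ! j) G (fibre ds j x r) = mat_vec (ds ! j) (Ls ! j) (fibre ds j x r)"
  shows "loc_apply (Ls[j := G]) ds x = loc_apply Ls ds x"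
proof -
  have s: "loc_apply ((id_ops (length ds))[j := G]) ds x = loc_apply ((id_ops (length ds))[j := Ls ! j]) ds x"
  proof
    fix "is" show "loc_apply ((id_ops (length ds))[j := G]) ds x is = loc_apply ((id_ops (length ds))[j := Ls ! j]) ds x is"
    proof (cases "is \<in> idx ds")
      case True
      then show ?thesis using eq[OF True] by (simp add: loc_single_party_mat_vec[OF True j])
    qed (simp add: loc_out)
  qed
  have "loc_apply (Ls[j := G]) ds x = loc_apply (Ls[j := id_mat]) ds (loc_apply ((id_ops (length ds))[j := G]) ds x)"
    using loc_factor_party_first[of "Ls[j := G]" ds j x] len j by simp
  also have "\<dots> = loc_apply Ls ds x"
    using loc_factor_party_first[OF len j, of x] s by simp
  finally show ?thesis .
qed

lemma loc_replace_factors: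
  assumes lenL: "length Ls = length ds" and lenN: "length Ns = length ds"
    and eq: "\<And>j r. j < length ds \<Longrightarrow> r \<in> idx ds \<Longrightarrow> mat_vec (ds ! j) (Ns ! j) (fibre ds j x r) = mat_vec (ds ! j) (Ls ! j) (fibre ds j x r)"
  shows "loc_apply Ns ds x = loc_apply Ls ds x"
proof -
  have "k \<le> length ds \<Longrightarrow> loc_apply (take k Ns @ drop k Ls) ds x = loc_apply Ls ds x" for k
  proof (induction k)
    case 0 then show ?case by simp
  next
    case (Suc k)
    let ?L = "take k Ns @ drop k Ls"
    have k: "k < length ds" using Suc by simp
    have lL: "length ?L = length ds" using lenL lenN k by simp
    have Lk: "?L ! k = Ls ! k" using lenL lenN k by (simp add: nth_append)
    have upd: "take (Suc k) Ns @ drop (Suc k) Ls = ?L[k := Ns ! k]"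
      by (rule nth_equalityI) (use lenL lenN k in \<open>auto simp: nth_append nth_list_update min_def\<close>)
    have "loc_apply (?L[k := Ns ! k]) ds x = loc_apply ?L ds x"
      by (rule loc_replace_factor[OF lL k]) (simp add: Lk eq[OF k])
    then show ?case using Suc upd by simp
  qed
  from this[of "length ds"] show ?thesis using lenN lenL by simp
qed

section \<open>SLOCC equivalence is realised by invertible operators\<close>

lemma matrix_of_linear:
  assumes lin: "Vector_Spaces.linear cscale cscale Nl"
    and into: "\<And>x. Nl x \<in> supported {..<d}"
  shows "\<exists>N. \<forall>x\<in>supported {..<d}. mat_vec d N x = Nl x"
proof (intro exI ballI)
  define N where "N = (\<lambda>a c. Nl (unit_vec c) a)"
  fix x assume x: "x \<in> supported {..<d}"
  have col: "mat_vec d N (unit_vec c) = Nl (unit_vec c)" if "c < d" for c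
    using mat_vec_unit_vec[OF that, of N] into[of "unit_vec c"] by (auto simp: N_def fun_eq_iff supported_def)
  have "mat_vec d N x = (\<Sum>c<d. cscale (x c) (mat_vec d N (unit_vec c)))" by (rule mat_vec_sum_unit_vec[OF x])
  also have "\<dots> = (\<Sum>c<d. Nl (cscale (x c) (unit_vec c)))"
    by (intro sum.cong refl) (simp add: col VP.linear_scale[OF lin])
  also have "\<dots> = Nl (\<Sum>c<d. cscale (x c) (unit_vec c))" by (rule VP.linear_sum[OF lin, symmetric])
  also have "\<dots> = Nl x" using supported_unit_vec_expansion[OF finite_lessThan x] by simp
  finally show "mat_vec d N x = Nl x" .
qed

lemma extend_bases_bij:
  assumes fI: "finite I" and b: "b \<subseteq> supported I" "VS.independent b"
    and c: "c \<subseteq> supported I" "VS.independent c" and card: "card b = card c"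
  obtains B C g where "b \<subseteq> B" "B \<subseteq> supported I" "VS.independent B" "supported I \<subseteq> VS.span B"
    "c \<subseteq> C" "C \<subseteq> supported I" "VS.independent C" "supported I \<subseteq> VS.span C"
    "bij_betw g (B - b) (C - c)"
proof -
  obtain B where B: "b \<subseteq> B" "B \<subseteq> supported I" "VS.independent B" "supported I \<subseteq> VS.span B"
    using VS.maximal_independent_subset_extend[OF b] by blast
  obtain C where C: "c \<subseteq> C" "C \<subseteq> supported I" "VS.independent C" "supported I \<subseteq> VS.span C"
    using VS.maximal_independent_subset_extend[OF c] by blast
  have fB: "finite B" "card B = card I" using basis_supported_card[OF fI B(2-4)] by auto
  have fC: "finite C" "card C = card I" using basis_supported_card[OF fI C(2-4)] by auto
  have "finite b" "finite c" using B(1) C(1) fB(1) fC(1) finite_subset by blast+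
  then have "card (B - b) = card (C - c)"
    using card_Diff_subset[OF _ B(1)] card_Diff_subset[OF _ C(1)] fB fC card by simp
  then obtain g where "bij_betw g (B - b) (C - c)"
    using finite_same_card_bij[of "B - b" "C - c"] fB fC by blast
  then show ?thesis using that B C by blast
qed

text \<open>A matrix that maps an independent set \<open>b\<close> injectively onto an independent set agrees on
  \<open>b\<close> with an invertible matrix: extend \<open>b\<close> and its image to bases and match the extensions.\<close>
lemma extend_to_invertible:
  assumes bs: "b \<subseteq> supported {..<d}" and indb: "VS.independent b"
    and injb: "inj_on (mat_vec d M) b" and indMb: "VS.independent (mat_vec d M ` b)"
  shows "\<exists>N R. (\<forall>v\<in>b. mat_vec d N v = mat_vec d M v) \<and> inverse_mats d N R"
proof -
  define Mb where "Mb = mat_vec d M ` b"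
  have Mbs: "Mb \<subseteq> supported {..<d}" unfolding Mb_def using mat_vec_supported by blast
  obtain Bb Cc g where Bb: "b \<subseteq> Bb" "Bb \<subseteq> supported {..<d}" "VS.independent Bb" "supported {..<d} \<subseteq> VS.span Bb"
    and Cc: "Mb \<subseteq> Cc" "Cc \<subseteq> supported {..<d}" "VS.independent Cc" "supported {..<d} \<subseteq> VS.span Cc"
    and g: "bij_betw g (Bb - b) (Cc - Mb)"
    using extend_bases_bij[OF finite_lessThan bs indb Mbs] indMb card_image[OF injb] by (metis Mb_def)
  define f where "f v = (if v \<in> b then mat_vec d M v else g v)" for v
  define Nl where "Nl = VP.construct Bb f"
  have linN: "Vector_Spaces.linear cscale cscale Nl" unfolding Nl_def by (rule VP.linear_construct[OF Bb(3)])
  have NlB: "v \<in> Bb \<Longrightarrow> Nl v = f v" for v unfolding Nl_def by (rule VP.construct_basis[OF Bb(3)])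
  have fB: "f ` Bb \<subseteq> supported {..<d}"
    using g Cc(2) mat_vec_supported by (force simp: f_def bij_betw_def)
  have "Nl x \<in> supported {..<d}" for x
    using VP.construct_in_span[OF Bb(3), of f x] span_subset_supported[OF fB] by (auto simp: Nl_def)
  then obtain N where N: "\<And>x. x \<in> supported {..<d} \<Longrightarrow> mat_vec d N x = Nl x"
    using matrix_of_linear[OF linN] by blast
  have agree: "\<forall>v\<in>b. mat_vec d N v = mat_vec d M v"
  proof
    fix v assume v: "v \<in> b"
    show "mat_vec d N v = mat_vec d M v"
      using N[OF subsetD[OF bs v]] NlB[OF subsetD[OF Bb(1) v]] v by (simp add: f_def)
  qed
  have "Cc \<subseteq> Nl ` Bb"
  proof
    fix y assume y: "y \<in> Cc"
    show "y \<in> Nl ` Bb"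
    proof (cases "y \<in> Mb")
      case True
      then show ?thesis using NlB Bb(1) by (force simp: f_def Mb_def)
    next
      case False
      then have "y \<in> g ` (Bb - b)" using g y bij_betw_imp_surj_on by fastforce
      then show ?thesis using NlB by (force simp: f_def)
    qed
  qed
  then have "VS.span Cc \<subseteq> Nl ` VS.span Bb"
    using VS.span_mono VP.linear_span_image[OF linN] by metis
  then have "\<exists>x\<in>supported {..<d}. mat_vec d N x = e" if "e \<in> supported {..<d}" for e
    using that Cc(4) span_subset_supported[OF Bb(2)] N by force
  then show ?thesis using agree surj_mat_invertible by blast
qed

text \<open>If the fibre sets \<open>P\<close> and \<open>Q\<close> of two states are mapped into each other's spans by the
  matrices \<open>M\<close> and \<open>M'\<close>, then \<open>M\<close> maps a basis \<open>b\<close> of \<open>span P\<close> injectively onto an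
  independent set (dimensions cannot drop along \<open>P \<rightarrow> Q \<rightarrow> P\<close>).\<close>
lemma mat_vec_preserves_basis:
  assumes fP: "finite P"
    and b: "b \<subseteq> P" "VS.independent b" "P \<subseteq> VS.span b"
    and QP: "Q \<subseteq> VS.span (mat_vec d M ` P)" and PQ: "P \<subseteq> VS.span (mat_vec d M' ` Q)"
  shows "inj_on (mat_vec d M) b \<and> VS.independent (mat_vec d M ` b)"
proof -
  have fb: "finite b" using fP b(1) finite_subset by blast
  define Mb where "Mb = mat_vec d M ` b"
  have fMb: "finite Mb" using fb Mb_def by simp
  have "mat_vec d M ` P \<subseteq> VS.span Mb"
    using b(3) VP.linear_span_image[OF mat_vec_linear] unfolding Mb_def by blast
  then have QMb: "Q \<subseteq> VS.span Mb" using QP VS.span_minimal VS.subspace_span by blast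
  obtain c where c: "c \<subseteq> Mb" "VS.independent c" "Mb \<subseteq> VS.span c"
    using VS.maximal_independent_subset by blast
  have fc: "finite c" using fMb c(1) finite_subset by blast
  have "Q \<subseteq> VS.span c" using QMb c(3) VS.span_minimal VS.subspace_span by blast
  then have "mat_vec d M' ` Q \<subseteq> VS.span (mat_vec d M' ` c)"
    using VP.linear_span_image[OF mat_vec_linear] by blast
  then have "b \<subseteq> VS.span (mat_vec d M' ` c)" using PQ b(1) VS.span_minimal VS.subspace_span by blast
  then have "card b \<le> card (mat_vec d M' ` c)"
    using VS.independent_span_bound[OF finite_imageI[OF fc] b(2)] by simp
  then have h1: "card b \<le> card c" using card_image_le[OF fc] le_trans by blast
  have h2: "card c \<le> card Mb" using card_mono[OF fMb c(1)] .
  have h3: "card Mb \<le> card b" unfolding Mb_def using card_image_le[OF fb] .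
  then have "c = Mb" using card_subset_eq[OF fMb c(1)] h1 h2 h3 by simp
  moreover have "card (mat_vec d M ` b) = card b" using h1 h2 h3 by (simp add: Mb_def)
  ultimately show ?thesis using c(2) eq_card_imp_inj_on[OF fb] by (simp add: Mb_def)
qed

lemma extend_party:
  assumes P: "P \<subseteq> supported {..<d}" "finite P"
    and QP: "Q \<subseteq> VS.span (mat_vec d M ` P)" and PQ: "P \<subseteq> VS.span (mat_vec d M' ` Q)"
  shows "\<exists>N R. (\<forall>p\<in>P. mat_vec d N p = mat_vec d M p) \<and> inverse_mats d N R"
proof -
  obtain b where b: "b \<subseteq> P" "VS.independent b" "P \<subseteq> VS.span b"
    using VS.maximal_independent_subset by blast
  have "inj_on (mat_vec d M) b \<and> VS.independent (mat_vec d M ` b)"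
    by (rule mat_vec_preserves_basis[OF P(2) b QP PQ])
  then obtain N R where NR: "\<forall>v\<in>b. mat_vec d N v = mat_vec d M v" "inverse_mats d N R"
    using extend_to_invertible[of b d M] b(1,2) P(1) by blast
  have "mat_vec d N p = mat_vec d M p" if "p \<in> P" for p
    using VP.linear_eq_on[OF mat_vec_linear[of d N] mat_vec_linear[of d M], of p b] NR(1) b(3) that by blast
  then show ?thesis using NR(2) by blast
qed

text \<open>Party by party, the factor \<open>M\<^sub>j\<close> of an operator mapping \<open>\<psi>'\<close> to \<open>\<psi>\<close> is replaced by an
  invertible matrix agreeing with it on the \<open>j\<close>-fibres of \<open>\<psi>'\<close>.\<close>
lemma slocc_equiv_invertible:
  assumes le1: "slocc_le ds \<psi> \<psi>'" and le2: "slocc_le ds \<psi>' \<psi>"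
  shows "\<exists>Ns Rs. length Ns = length ds \<and> length Rs = length ds \<and> loc_apply Ns ds \<psi>' = \<psi> \<and>
     (\<forall>j<length ds. inverse_mats (ds ! j) (Ns ! j) (Rs ! j))"
proof -
  obtain Ms where Ms: "length Ms = length ds" "loc_apply Ms ds \<psi>' = \<psi>" using le1 by (auto simp: slocc_le_def)
  obtain Ms' where Ms': "length Ms' = length ds" "loc_apply Ms' ds \<psi> = \<psi>'" using le2 by (auto simp: slocc_le_def)
  have "\<exists>N R. j < length ds \<longrightarrow> (\<forall>p\<in>fibre ds j \<psi>' ` idx ds. mat_vec (ds ! j) N p = mat_vec (ds ! j) (Ms ! j) p) \<and>
      inverse_mats (ds ! j) N R" for j
  proof (cases "j < length ds")
    case True
    have P: "fibre ds j \<psi>' ` idx ds \<subseteq> supported {..<ds ! j}" using fibre_supported by blast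
    have QP: "fibre ds j \<psi> ` idx ds \<subseteq> VS.span (mat_vec (ds ! j) (Ms ! j) ` fibre ds j \<psi>' ` idx ds)"
      using fibre_loc_span_image[OF Ms(1) True, of _ \<psi>'] Ms(2) by blast
    have PQ: "fibre ds j \<psi>' ` idx ds \<subseteq> VS.span (mat_vec (ds ! j) (Ms' ! j) ` fibre ds j \<psi> ` idx ds)"
      using fibre_loc_span_image[OF Ms'(1) True, of _ \<psi>] Ms'(2) by blast
    show ?thesis using extend_party[OF P finite_imageI[OF finite_idx] QP PQ] by blast
  qed simp
  then obtain N R where NR: "\<And>j. j < length ds \<Longrightarrow>
      (\<forall>p\<in>fibre ds j \<psi>' ` idx ds. mat_vec (ds ! j) (N j) p = mat_vec (ds ! j) (Ms ! j) p) \<and>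
      inverse_mats (ds ! j) (N j) (R j)"
    by metis
  define Ns where "Ns = map N [0..<length ds]"
  define Rs where "Rs = map R [0..<length ds]"
  have "loc_apply Ns ds \<psi>' = loc_apply Ms ds \<psi>'"
    by (rule loc_replace_factors[OF Ms(1)]) (use NR in \<open>auto simp: Ns_def\<close>)
  then show ?thesis using NR Ms(2) by (intro exI[of _ Ns] exI[of _ Rs]) (auto simp: Ns_def Rs_def)
qed

section \<open>Operators whose range contains a hyperplane\<close>

lemma nonsurjective_mat_left_null:
  assumes "\<not> (\<forall>e\<in>supported {..<d}. \<exists>x\<in>supported {..<d}. mat_vec d M x = e)"
  shows "\<exists>w\<in>supported {..<d}. w \<noteq> 0 \<and> (\<forall>b<d. (\<Sum>a<d. cnj (w a) * M a b) = 0)"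
proof -
  obtain e where e: "e \<in> supported {..<d}" "\<forall>x\<in>supported {..<d}. mat_vec d M x \<noteq> e"
    using assms by blast
  define S where "S = (\<lambda>b. mat_vec d M (unit_vec b)) ` {..<d}"
  have Ssub: "S \<subseteq> supported {..<d}" unfolding S_def using mat_vec_supported by blast
  have "e \<notin> VS.span S"
  proof
    assume "e \<in> VS.span S"
    then obtain c where c: "e = (\<Sum>b<d. cscale (c b) (mat_vec d M (unit_vec b)))"
      using span_image_as_sum[of e "\<lambda>b. mat_vec d M (unit_vec b)" "{..<d}"] unfolding S_def by auto
    define x where "x = (\<Sum>b<d. cscale (c b) (unit_vec b))"
    have "x \<in> supported {..<d}"
      unfolding x_def by (intro sum_supported supported_cscale unit_vec_supported) simp
    moreover have "mat_vec d M x = e"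
      unfolding x_def c by (simp add: VP.linear_sum[OF mat_vec_linear] mat_vec_cscale)
    ultimately show False using e(2) by blast
  qed
  then obtain w where w: "w \<in> supported {..<d}" "w \<noteq> 0" "\<forall>s\<in>S. inner_on {..<d} s w = 0"
    using nonzero_orthogonal_to_nonspanning[OF finite_lessThan Ssub _ e(1)] by (auto simp: S_def)
  have "(\<Sum>a<d. cnj (w a) * M a b) = 0" if b: "b < d" for b
  proof -
    have "inner_on {..<d} w (mat_vec d M (unit_vec b)) = 0"
      using w(3) b inner_on_zero_sym unfolding S_def by blast
    then show ?thesis by (simp add: inner_on_def mat_vec_unit_vec[OF b])
  qed
  then show ?thesis using w(1,2) by blast
qed

definition line_vec :: "nat list \<Rightarrow> nat \<Rightarrow> nat list \<Rightarrow> (nat \<Rightarrow> complex) \<Rightarrow> tensor" where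
  "line_vec ds j r w = (\<lambda>is. if is \<in> idx ds \<and> (\<forall>k<length ds. k \<noteq> j \<longrightarrow> is ! k = r ! k) then w (is ! j) else 0)"

lemma line_vec_orthogonal_range:
  assumes lenB: "length Bs = length ds" and j: "j < length ds" and r: "r \<in> idx ds"
    and wM: "\<And>b. b < ds ! j \<Longrightarrow> (\<Sum>a<ds ! j. cnj (w a) * (Bs ! j) a b) = 0"
  shows "inner_on (idx ds) (line_vec ds j r w) (loc_apply Bs ds x) = 0"
proof -
  define d where "d = ds ! j"
  define M where "M = Bs ! j"
  define u where "u = line_vec ds j r w"
  define z where "z = loc_apply (Bs[j := id_mat]) ds x"
  let ?L = "(id_ops (length ds))[j := M]"
  have lr: "length r = length ds" using r idx_length by blast
  have "loc_apply Bs ds x = loc_apply ?L ds z"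
    unfolding z_def M_def by (rule loc_factor_party_last[OF lenB j])
  then have "inner_on (idx ds) u (loc_apply Bs ds x) = (\<Sum>is\<in>idx ds. cnj (u is) * loc_apply ?L ds z is)"
    by (simp add: inner_on_def)
  also have "\<dots> = (\<Sum>a<d. cnj (u (r[j := a])) * loc_apply ?L ds z (r[j := a]))"
    unfolding d_def
    by (rule sum_idx_line[OF r j]) (auto simp: u_def line_vec_def split: if_splits)
  also have "\<dots> = (\<Sum>a<d. cnj (w a) * (\<Sum>b<d. M a b * z (r[j := b])))"
  proof (rule sum.cong[OF refl])
    fix a assume a: "a \<in> {..<d}"
    have ra: "r[j := a] \<in> idx ds" using idx_upd[OF r] a d_def by auto
    have "u (r[j := a]) = w a" using ra lr j by (simp add: u_def line_vec_def)
    moreover have "loc_apply ?L ds z (r[j := a]) = (\<Sum>b<d. M a b * z (r[j := b]))"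
      using loc_single_party[OF ra j] lr j d_def by simp
    ultimately show "cnj (u (r[j := a])) * loc_apply ?L ds z (r[j := a]) = cnj (w a) * (\<Sum>b<d. M a b * z (r[j := b]))"
      by simp
  qed
  also have "\<dots> = (\<Sum>b<d. (\<Sum>a<d. cnj (w a) * M a b) * z (r[j := b]))"
    by (simp add: sum_distrib_left sum_distrib_right mult.assoc) (rule sum.swap)
  also have "\<dots> = 0" using wM by (simp add: d_def M_def)
  finally show ?thesis by (simp add: u_def)
qed

text \<open>Otherwise, with \<open>w\<^sup>\<dagger> B\<^sub>j = 0\<close>, all line vectors
  \<open>w\<close> on \<open>j\<close>-lines would be multiples of \<open>\<psi>\<close>; but two parallel lines differing in another party
  \<open>k\<close> (which exists as there are at least two parties, each of dimension at least two) carry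
  vectors with disjoint supports.\<close>
lemma hyperplane_range_factor_surj:
  assumes m2: "2 \<le> length ds" and d2: "\<forall>d\<in>set ds. 2 \<le> d" and lenB: "length Bs = length ds"
    and psi: "\<psi> \<in> states ds" "\<psi> \<noteq> 0"
    and H: "\<And>y. y \<in> states ds \<Longrightarrow> inner_on (idx ds) \<psi> y = 0 \<Longrightarrow> \<exists>x. loc_apply Bs ds x = y"
    and j: "j < length ds"
  shows "\<forall>e\<in>supported {..<ds ! j}. \<exists>x\<in>supported {..<ds ! j}. mat_vec (ds ! j) (Bs ! j) x = e"
proof (rule ccontr)
  assume "\<not> ?thesis"
  then obtain w where w: "w \<in> supported {..<ds ! j}" "w \<noteq> 0"
    and wM: "\<And>b. b < ds ! j \<Longrightarrow> (\<Sum>a<ds ! j. cnj (w a) * (Bs ! j) a b) = 0"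
    using nonsurjective_mat_left_null by blast
  have multiple: "line_vec ds j r w = cscale (inner_on (idx ds) \<psi> (line_vec ds j r w) / inner_on (idx ds) \<psi> \<psi>) \<psi>"
    if r: "r \<in> idx ds" for r
  proof (rule orthogonal_to_complement_multiple[OF finite_idx])
    show "\<psi> \<in> supported (idx ds)" "\<psi> \<noteq> 0" using psi states_supported by auto
    show "line_vec ds j r w \<in> supported (idx ds)" by (simp add: line_vec_def supported_def)
    fix y assume "y \<in> supported (idx ds)" "inner_on (idx ds) \<psi> y = 0"
    then obtain x where "loc_apply Bs ds x = y" using H states_supported by blast
    then show "inner_on (idx ds) (line_vec ds j r w) y = 0"
      using line_vec_orthogonal_range[OF lenB j r wM] by blast
  qed
  define k where "k = (if j = 0 then 1 else (0::nat))"
  have k: "k < length ds" "k \<noteq> j" using m2 by (auto simp: k_def)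
  define r1 where "r1 = replicate (length ds) (0::nat)"
  define r2 where "r2 = r1[k := 1]"
  have dpos: "2 \<le> ds ! i" if "i < length ds" for i using d2 nth_mem that by blast
  have r1: "r1 \<in> idx ds" using dpos by (force simp: r1_def idx_def)
  have r2: "r2 \<in> idx ds" unfolding r2_def by (rule idx_upd[OF r1]) (use dpos k in force)
  obtain a0 where a0: "w a0 \<noteq> 0" using w(2) by (auto simp: fun_eq_iff)
  have a0d: "a0 < ds ! j" using w(1) a0 by (auto simp: supported_def)
  have lr1: "length r1 = length ds" by (simp add: r1_def)
  define p where "p = r1[j := a0]"
  define q where "q = r2[j := a0]"
  have p: "p \<in> idx ds" and q: "q \<in> idx ds" unfolding p_def q_def using idx_upd r1 r2 a0d by auto
  have "line_vec ds j r1 w p \<noteq> 0" using p lr1 j a0 by (simp add: line_vec_def p_def)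
  then have "\<psi> p \<noteq> 0" using fun_cong[OF multiple[OF r1], of p] by auto
  moreover have "line_vec ds j r2 w p = 0" using k lr1 by (auto simp: line_vec_def p_def r2_def r1_def)
  moreover have "inner_on (idx ds) \<psi> \<psi> \<noteq> 0"
    using inner_on_self_eq_0[OF finite_idx] psi states_supported by blast
  ultimately have "inner_on (idx ds) \<psi> (line_vec ds j r2 w) = 0"
    using fun_cong[OF multiple[OF r2], of p] by simp
  then have "line_vec ds j r2 w q = 0" using fun_cong[OF multiple[OF r2], of q] by simp
  moreover have "line_vec ds j r2 w q = w a0" using q lr1 j by (simp add: line_vec_def q_def r2_def)
  ultimately show False using a0 by simp
qed

lemma hyperplane_range_invertible:
  assumes m2: "2 \<le> length ds" and d2: "\<forall>d\<in>set ds. 2 \<le> d" and lenB: "length Bs = length ds"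
    and psi: "\<psi> \<in> states ds" "\<psi> \<noteq> 0"
    and H: "\<And>y. y \<in> states ds \<Longrightarrow> inner_on (idx ds) \<psi> y = 0 \<Longrightarrow> \<exists>x. loc_apply Bs ds x = y"
  shows "\<exists>Rs. length Rs = length ds \<and> (\<forall>j<length ds. inverse_mats (ds ! j) (Bs ! j) (Rs ! j))"
proof -
  have "\<exists>R. j < length ds \<longrightarrow> inverse_mats (ds ! j) (Bs ! j) R" for j
    using hyperplane_range_factor_surj[OF m2 d2 lenB psi H] surj_mat_invertible by blast
  then obtain R where R: "\<And>j. j < length ds \<Longrightarrow> inverse_mats (ds ! j) (Bs ! j) (R j)"
    by metis
  show ?thesis by (rule exI[of _ "map R [0..<length ds]"]) (simp add: R)
qed

section \<open>The SLOCC preorder\<close>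

lemma slocc_le_refl: "x \<in> states ds \<Longrightarrow> slocc_le ds x x"
  unfolding slocc_le_def using loc_id_ops by (intro exI[of _ "id_ops (length ds)"]) simp

lemma slocc_le_trans: "slocc_le ds a b \<Longrightarrow> slocc_le ds b c \<Longrightarrow> slocc_le ds a c"
  unfolding slocc_le_def using loc_comp by (metis length_mat_mul_list)

lemma slocc_class_eq_iff:
  assumes "x \<in> states ds" "y \<in> states ds"
  shows "slocc_class ds x = slocc_class ds y \<longleftrightarrow> slocc_equiv ds x y"
proof
  assume "slocc_class ds x = slocc_class ds y"
  moreover have "x \<in> slocc_class ds x"
    using assms slocc_le_refl by (simp add: slocc_class_def slocc_equiv_def)
  ultimately show "slocc_equiv ds x y" by (simp add: slocc_class_def)
next
  assume "slocc_equiv ds x y"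
  then show "slocc_class ds x = slocc_class ds y"
    unfolding slocc_class_def slocc_equiv_def using slocc_le_trans by blast
qed

text \<open>A nonzero multiple of an image of \<open>\<psi>'\<close> is below \<open>\<psi>'\<close>: the scalar is absorbed into a factor.\<close>
lemma slocc_le_of_multiple:
  assumes lenB: "length Bs = length ds" and ne: "ds \<noteq> []"
    and eq: "loc_apply Bs ds \<psi>' = cscale c \<psi>" and c: "c \<noteq> 0"
  shows "slocc_le ds \<psi> \<psi>'"
proof -
  let ?Cs = "Bs[0 := (\<lambda>a b. (1 / c) * (Bs ! 0) a b)]"
  have "\<psi> = cscale (1 / c) (loc_apply Bs ds \<psi>')" using eq c by (simp add: cscale_def fun_eq_iff)
  also have "\<dots> = loc_apply ?Cs ds \<psi>'" using loc_scale_first[of Bs ds "1 / c" \<psi>'] lenB ne by simp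
  finally show ?thesis unfolding slocc_le_def using lenB by (intro exI[of _ ?Cs]) simp
qed

section \<open>Slices along the first party\<close>

definition slice :: "tensor \<Rightarrow> nat \<Rightarrow> tensor" where
  "slice \<Phi> i = (\<lambda>js. \<Phi> (i # js))"

definition of_slices :: "nat \<Rightarrow> nat list \<Rightarrow> (nat \<Rightarrow> tensor) \<Rightarrow> tensor" where
  "of_slices d ds f = (\<lambda>v. case v of [] \<Rightarrow> 0 | i # js \<Rightarrow> if i < d \<and> js \<in> idx ds then f i js else 0)"

definition slices :: "nat \<Rightarrow> tensor \<Rightarrow> tensor set" where
  "slices n \<Phi> = slice \<Phi> ` {..<n}"

lemma slice_states: "\<Phi> \<in> states (d # ds) \<Longrightarrow> slice \<Phi> i \<in> states ds"
  by (auto simp: states_def slice_def idx_Cons_iff)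

lemma states_eq_slice:
  assumes "\<Phi> \<in> states (d # ds)" "\<Theta> \<in> states (d # ds)" "\<And>i. i < d \<Longrightarrow> slice \<Phi> i = slice \<Theta> i"
  shows "\<Phi> = \<Theta>"
proof (intro ext)
  fix v show "\<Phi> v = \<Theta> v"
  proof (cases "v \<in> idx (d # ds)")
    case True
    then obtain i js where v: "v = i # js" "i < d" by (cases v) (auto simp: idx_Nil_notin idx_Cons_iff)
    then show ?thesis using assms(3)[of i] by (simp add: slice_def fun_eq_iff)
  next
    case False then show ?thesis using assms by (simp add: states_def)
  qed
qed

lemma of_slices_states: "of_slices d ds f \<in> states (d # ds)"
  by (auto simp: states_def of_slices_def idx_Cons_iff split: list.splits)

lemma slice_of_slices: "i < d \<Longrightarrow> f i \<in> states ds \<Longrightarrow> slice (of_slices d ds f) i = f i"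
  by (auto simp: slice_def of_slices_def fun_eq_iff states_def)

lemma slices_subset_supported: "\<Phi> \<in> states (n # ds) \<Longrightarrow> slices n \<Phi> \<subseteq> supported (idx ds)"
  unfolding slices_def using slice_states states_supported by blast

lemma finite_slices[simp]: "finite (slices n \<Phi>)"
  by (simp add: slices_def)

lemma card_slices: "card (slices n \<Phi>) \<le> n"
  unfolding slices_def using card_image_le[of "{..<n}" "slice \<Phi>"] by simp

lemma slice_loc_Cons:
  assumes "length Ls = length ds" "i < d"
  shows "slice (loc_apply (L # Ls) (d # ds) \<Phi>) i = (\<Sum>a<d. cscale (L i a) (loc_apply Ls ds (slice \<Phi> a)))"
proof (intro ext)
  fix js
  show "slice (loc_apply (L # Ls) (d # ds) \<Phi>) i js = (\<Sum>a<d. cscale (L i a) (loc_apply Ls ds (slice \<Phi> a))) js"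
  proof (cases "js \<in> idx ds")
    case True
    then have ij: "i # js \<in> idx (d # ds)" using assms by (simp add: idx_Cons_iff)
    show ?thesis
      unfolding slice_def loc_in[OF ij] sum_fun_apply cscale_apply loc_in[OF True] sum_idx_Cons
      using assms by (simp add: prod.lessThan_Suc_shift sum_distrib_left mult_ac del: prod.lessThan_Suc)
  next
    case False
    then have "i # js \<notin> idx (d # ds)" by (simp add: idx_Cons_iff)
    then show ?thesis using False by (simp add: slice_def loc_out sum_fun_apply)
  qed
qed

lemma slocc_le_slices:
  assumes "slocc_le (n # ds) \<Phi>' \<Phi>"
  obtains Bs where "length Bs = length ds" "slices n \<Phi>' \<subseteq> VS.span (loc_apply Bs ds ` slices n \<Phi>)"
proof -
  obtain L where L: "length L = Suc (length ds)" "loc_apply L (n # ds) \<Phi> = \<Phi>'"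
    using assms by (auto simp: slocc_le_def)
  then obtain A Bs where AB: "L = A # Bs" by (cases L) auto
  have lenB: "length Bs = length ds" using L(1) AB by simp
  have "slice \<Phi>' k \<in> VS.span (loc_apply Bs ds ` slices n \<Phi>)" if k: "k < n" for k
  proof -
    have "slice \<Phi>' k = (\<Sum>a<n. cscale (A k a) (loc_apply Bs ds (slice \<Phi> a)))"
      using slice_loc_Cons[OF lenB k, of A \<Phi>] L(2) AB by simp
    then show ?thesis
      by (simp, intro VS.span_sum VS.span_scale VS.span_base) (auto simp: slices_def)
  qed
  then show ?thesis using that lenB by (auto simp: slices_def)
qed

lemma slocc_le_of_slices:
  assumes Phi': "\<Phi>' \<in> states (n # ds)" and lenB: "length Bs = length ds"
    and sub: "slices n \<Phi>' \<subseteq> VS.span (loc_apply Bs ds ` slices n \<Phi>)"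
  shows "slocc_le (n # ds) \<Phi>' \<Phi>"
proof -
  have "\<exists>a. slice \<Phi>' k = (\<Sum>i<n. cscale (a i) (loc_apply Bs ds (slice \<Phi> i)))" if k: "k < n" for k
  proof -
    have "slice \<Phi>' k \<in> VS.span ((\<lambda>i. loc_apply Bs ds (slice \<Phi> i)) ` {..<n})"
      using sub k by (auto simp: slices_def image_image)
    then show ?thesis using span_image_as_sum by blast
  qed
  then obtain A where A: "\<And>k. k < n \<Longrightarrow> slice \<Phi>' k = (\<Sum>i<n. cscale (A k i) (loc_apply Bs ds (slice \<Phi> i)))"
    by metis
  have "\<Phi>' = loc_apply (A # Bs) (n # ds) \<Phi>"
    by (rule states_eq_slice[OF Phi' loc_states]) (simp add: slice_loc_Cons[OF lenB] A)
  then show ?thesis unfolding slocc_le_def using lenB by (intro exI[of _ "A # Bs"]) simp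
qed

text \<open>\<open>\<Phi>\<close> has full slices if its \<open>n\<close> slices are distinct and linearly independent; \<open>\<psi>\<close> is then
  orthogonal to them iff it spans the orthogonal complement of their span.\<close>

definition full_slices :: "nat list \<Rightarrow> nat \<Rightarrow> tensor \<Rightarrow> bool" where
  "full_slices ds n \<Phi> \<longleftrightarrow> \<Phi> \<in> states (n # ds) \<and> card (slices n \<Phi>) = n \<and> VS.independent (slices n \<Phi>)"

definition orthogonal_to_slices :: "nat list \<Rightarrow> nat \<Rightarrow> tensor \<Rightarrow> tensor \<Rightarrow> bool" where
  "orthogonal_to_slices ds n \<psi> \<Phi> \<longleftrightarrow> (\<forall>i<n. inner_on (idx ds) \<psi> (slice \<Phi> i) = 0)"

lemma orthogonal_to_slices_inner:
  "orthogonal_to_slices ds n \<psi> \<Phi> \<Longrightarrow> \<forall>s\<in>slices n \<Phi>. inner_on (idx ds) s \<psi> = 0"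
  unfolding orthogonal_to_slices_def slices_def using inner_on_zero_sym by blast

lemma full_slices_of_independent:
  assumes b: "b \<subseteq> states ds" "VS.independent b" "finite b" "card b = n"
  obtains \<Phi> where "full_slices ds n \<Phi>" "slices n \<Phi> = b"
proof -
  obtain \<chi> where chi: "bij_betw \<chi> {..<n} b"
    using ex_bij_betw_nat_finite[OF b(3)] b(4) by (auto simp: atLeast0LessThan)
  have chis: "\<chi> k \<in> states ds" if "k < n" for k using chi b(1) that bij_betwE by blast
  have "slices n (of_slices n ds \<chi>) = \<chi> ` {..<n}"
    unfolding slices_def using slice_of_slices[OF _ chis] by auto
  also have "\<dots> = b" using chi bij_betw_imp_surj_on by metis
  finally have "slices n (of_slices n ds \<chi>) = b" .
  then show ?thesis using b of_slices_states by (intro that) (simp_all add: full_slices_def)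
qed

section \<open>Bijections between sets of classes\<close>

lemma bij_betw_classes:
  assumes left: "\<And>a. a \<in> A \<Longrightarrow> \<exists>b\<in>B. R a b" and right: "\<And>b. b \<in> B \<Longrightarrow> \<exists>a\<in>A. R a b"
    and compat: "\<And>a a' b b'. a \<in> A \<Longrightarrow> a' \<in> A \<Longrightarrow> b \<in> B \<Longrightarrow> b' \<in> B \<Longrightarrow> R a b \<Longrightarrow> R a' b' \<Longrightarrow>
                  clA a = clA a' \<longleftrightarrow> clB b = clB b'"
  shows "\<exists>F. bij_betw F (clA ` A) (clB ` B) \<and> (\<forall>a b. a \<in> A \<longrightarrow> b \<in> B \<longrightarrow> R a b \<longrightarrow> F (clA a) = clB b)"
proof -
  define pick where "pick C = (SOME b. b \<in> B \<and> (\<exists>a\<in>A. clA a = C \<and> R a b))" for C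
  define F where "F C = clB (pick C)" for C
  have F: "F (clA a) = clB b" if "a \<in> A" "b \<in> B" "R a b" for a b
  proof -
    have "\<exists>b. b \<in> B \<and> (\<exists>a'\<in>A. clA a' = clA a \<and> R a' b)" using that by blast
    then have "pick (clA a) \<in> B \<and> (\<exists>a'\<in>A. clA a' = clA a \<and> R a' (pick (clA a)))"
      unfolding pick_def by (rule someI_ex)
    then show ?thesis using compat[of _ a "pick (clA a)" b] that unfolding F_def by metis
  qed
  have "inj_on F (clA ` A)"
  proof (rule inj_onI)
    fix C C' assume "C \<in> clA ` A" "C' \<in> clA ` A" and eq: "F C = F C'"
    then obtain a a' where a: "a \<in> A" "C = clA a" and a': "a' \<in> A" "C' = clA a'" by blast
    obtain b b' where "b \<in> B" "R a b" "b' \<in> B" "R a' b'" using left a(1) a'(1) by metis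
    then show "C = C'" using F compat a a' eq by metis
  qed
  moreover have "F ` clA ` A = clB ` B"
    using F left right by (auto simp: image_iff) metis+
  ultimately show ?thesis using F unfolding bij_betw_def by blast
qed

section \<open>Maximal states and their complements\<close>

text \<open>The setting of the theorem: \<open>ds = [d\<^sub>2, \<dots>, d\<^sub>K]\<close> with \<open>K \<ge> 3\<close> and all \<open>d\<^sub>j \<ge> 2\<close>, and
  the first party has dimension \<open>n = d\<^sub>2 \<cdots> d\<^sub>K - 1\<close>.\<close>
locale complement_setting =
  fixes ds :: "nat list" and n :: nat
  assumes parties: "2 \<le> length ds" and dims: "\<forall>d\<in>set ds. 2 \<le> d" and dim_H: "Suc n = prod_list ds"
begin

lemma card_idx_eq: "card (idx ds) = Suc n"
  using card_idx dim_H by simp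

lemma full_slices_orthogonal_exists:
  assumes g: "full_slices ds n \<Phi>"
  shows "\<exists>\<psi>\<in>states ds. \<psi> \<noteq> 0 \<and> orthogonal_to_slices ds n \<psi> \<Phi>"
proof -
  have sub: "slices n \<Phi> \<subseteq> supported (idx ds)" using g slices_subset_supported full_slices_def by blast
  have "card (slices n \<Phi>) < card (idx ds)" using g card_idx_eq by (simp add: full_slices_def)
  from nonzero_orthogonal_exists[OF finite_idx sub finite_slices this] obtain w where
    w: "w \<in> supported (idx ds)" "w \<noteq> 0" "\<forall>s\<in>slices n \<Phi>. inner_on (idx ds) s w = 0" by blast
  have "orthogonal_to_slices ds n w \<Phi>"
    unfolding orthogonal_to_slices_def using w(3) inner_on_zero_sym by (auto simp: slices_def)
  then show ?thesis using w states_supported by blast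
qed

lemma full_slices_span:
  assumes g: "full_slices ds n \<Phi>" and psi: "\<psi> \<in> states ds" "\<psi> \<noteq> 0" "orthogonal_to_slices ds n \<psi> \<Phi>"
    and y: "y \<in> states ds" "inner_on (idx ds) \<psi> y = 0"
  shows "y \<in> VS.span (slices n \<Phi>)"
proof (rule ccontr)
  assume ny: "y \<notin> VS.span (slices n \<Phi>)"
  have sub: "slices n \<Phi> \<subseteq> supported (idx ds)" using g slices_subset_supported full_slices_def by blast
  have ind: "VS.independent (slices n \<Phi>)" and cS: "card (slices n \<Phi>) = n" using g full_slices_def by auto
  let ?T = "insert y (slices n \<Phi>)"
  have indT: "VS.independent ?T" using VS.independent_insertI[OF ny ind] .
  have "y \<notin> slices n \<Phi>" using ny VS.span_base by blast
  then have cT: "card ?T = Suc n" using cS by simp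
  have psiT: "\<psi> \<in> VS.span ?T"
  proof (rule ccontr)
    assume np: "\<psi> \<notin> VS.span ?T"
    have "insert \<psi> ?T \<subseteq> supported (idx ds)" using sub y(1) psi(1) states_supported by blast
    from independent_supported_card[OF finite_idx this VS.independent_insertI[OF np indT]]
    have "card (insert \<psi> ?T) \<le> Suc n" using card_idx_eq by simp
    moreover have "\<psi> \<notin> ?T" using np VS.span_base by blast
    ultimately show False using cT by simp
  qed
  have "\<forall>t\<in>?T. inner_on (idx ds) t \<psi> = 0"
    using orthogonal_to_slices_inner[OF psi(3)] y(2) inner_on_zero_sym by blast
  from inner_on_span_left[OF this psiT] have "inner_on (idx ds) \<psi> \<psi> = 0" .
  then show False using inner_on_self_eq_0[OF finite_idx] psi states_supported by blast
qed

lemma full_slices_orthogonal_unique: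
  assumes g: "full_slices ds n \<Phi>" and psi: "\<psi> \<in> states ds" "\<psi> \<noteq> 0" "orthogonal_to_slices ds n \<psi> \<Phi>"
    and x: "x \<in> states ds" "orthogonal_to_slices ds n x \<Phi>"
  shows "\<exists>c. x = cscale c \<psi>"
proof -
  have "x = cscale (inner_on (idx ds) \<psi> x / inner_on (idx ds) \<psi> \<psi>) \<psi>"
  proof (rule orthogonal_to_complement_multiple[OF finite_idx])
    show "\<psi> \<in> supported (idx ds)" "\<psi> \<noteq> 0" "x \<in> supported (idx ds)" using psi x states_supported by auto
    fix y assume "y \<in> supported (idx ds)" "inner_on (idx ds) \<psi> y = 0"
    then have "y \<in> VS.span (slices n \<Phi>)" using full_slices_span[OF g psi] states_supported by blast
    then have "inner_on (idx ds) y x = 0" using inner_on_span_left[OF orthogonal_to_slices_inner[OF x(2)]] by blast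
    then show "inner_on (idx ds) x y = 0" using inner_on_zero_sym by blast
  qed
  then show ?thesis by blast
qed

text \<open>If \<open>B\<close> maps the span of \<open>S\<close> onto a set containing the slices of \<open>\<Phi>\<close>, its range contains the
  hyperplane \<open>\<psi>\<^sup>\<perp>\<close>, which by key step (2) makes all factors of \<open>B\<close> invertible.\<close>
lemma complement_in_range:
  assumes g: "full_slices ds n \<Phi>" and psi: "\<psi> \<in> states ds" "\<psi> \<noteq> 0" "orthogonal_to_slices ds n \<psi> \<Phi>"
    and sub: "slices n \<Phi> \<subseteq> VS.span (loc_apply Bs ds ` S)"
    and y: "y \<in> states ds" "inner_on (idx ds) \<psi> y = 0"
  shows "\<exists>x\<in>VS.span S. loc_apply Bs ds x = y"
proof -
  have "y \<in> VS.span (slices n \<Phi>)" using full_slices_span[OF g psi y] .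
  also have "\<dots> \<subseteq> VS.span (loc_apply Bs ds ` S)" using sub VS.span_minimal VS.subspace_span by blast
  also have "\<dots> = loc_apply Bs ds ` VS.span S" by (rule VP.linear_span_image[OF loc_linear])
  finally show ?thesis by blast
qed

lemma adjoint_nonzero:
  assumes lenB: "length Bs = length ds" and psi': "\<psi>' \<in> states ds" "\<psi>' \<noteq> 0"
    and H: "\<And>y. y \<in> states ds \<Longrightarrow> inner_on (idx ds) \<psi>' y = 0 \<Longrightarrow> \<exists>x. loc_apply Bs ds x = y"
  shows "loc_apply (adj_ops Bs) ds \<psi>' \<noteq> 0"
proof
  assume z0: "loc_apply (adj_ops Bs) ds \<psi>' = 0"
  obtain Rs where Rs: "length Rs = length ds" "\<forall>j<length ds. inverse_mats (ds ! j) (Bs ! j) (Rs ! j)"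
    using hyperplane_range_invertible[OF parties dims lenB psi' H] by blast
  have "loc_apply Bs ds (loc_apply Rs ds \<psi>') = \<psi>'" by (rule loc_inv) (use Rs psi'(1) in auto)
  then have "inner_on (idx ds) \<psi>' \<psi>' = inner_on (idx ds) \<psi>' (loc_apply Bs ds (loc_apply Rs ds \<psi>'))" by simp
  also have "\<dots> = 0" using loc_adj[OF lenB] z0 by simp
  finally show False using inner_on_self_eq_0[OF finite_idx] psi' states_supported by blast
qed

text \<open>If \<open>\<Phi>' = (A \<otimes> B)\<Phi>\<close>,
  then \<open>B\<close> maps the slices of \<open>\<Phi>\<close> into the span of those of \<open>\<Phi>'\<close>, so \<open>B\<^sup>\<dagger> \<psi>'\<close> is a normal of
  \<open>\<Phi>\<close>, that is a multiple \<open>c \<psi>\<close>, and \<open>c \<noteq> 0\<close> since \<open>B\<close> is invertible.\<close>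
lemma slocc_le_normals:
  assumes g: "full_slices ds n \<Phi>" and g': "full_slices ds n \<Phi>'" and le: "slocc_le (n # ds) \<Phi>' \<Phi>"
    and psi: "\<psi> \<in> states ds" "\<psi> \<noteq> 0" "orthogonal_to_slices ds n \<psi> \<Phi>"
    and psi': "\<psi>' \<in> states ds" "\<psi>' \<noteq> 0" "orthogonal_to_slices ds n \<psi>' \<Phi>'"
  shows "slocc_le ds \<psi> \<psi>'"
proof -
  obtain Bs where lenB: "length Bs = length ds"
    and sub: "slices n \<Phi>' \<subseteq> VS.span (loc_apply Bs ds ` slices n \<Phi>)"
    using slocc_le_slices[OF le] by blast
  have "card (loc_apply Bs ds ` slices n \<Phi>) \<le> n" using card_image_le[OF finite_slices] card_slices le_trans by blast
  then have BS: "loc_apply Bs ds ` slices n \<Phi> \<subseteq> VS.span (slices n \<Phi>')"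
    using independent_card_spans[OF finite_imageI[OF finite_slices] sub] g' by (simp add: full_slices_def)
  define z where "z = loc_apply (adj_ops Bs) ds \<psi>'"
  have "orthogonal_to_slices ds n z \<Phi>" unfolding orthogonal_to_slices_def
  proof (intro allI impI)
    fix i assume i: "i < n"
    have "loc_apply Bs ds (slice \<Phi> i) \<in> VS.span (slices n \<Phi>')" using BS i by (auto simp: slices_def)
    then have "inner_on (idx ds) (loc_apply Bs ds (slice \<Phi> i)) \<psi>' = 0"
      using inner_on_span_left[OF orthogonal_to_slices_inner[OF psi'(3)]] by blast
    then show "inner_on (idx ds) z (slice \<Phi> i) = 0"
      unfolding z_def using loc_adj[OF lenB] inner_on_zero_sym by metis
  qed
  then obtain c where zc: "z = cscale c \<psi>"
    using full_slices_orthogonal_unique[OF g psi] loc_states z_def by blast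
  have "z \<noteq> 0" unfolding z_def
    by (rule adjoint_nonzero[OF lenB psi'(1,2)]) (use complement_in_range[OF g' psi' sub] in blast)
  then have "c \<noteq> 0" using zc by (auto simp: cscale_def fun_eq_iff zero_fun_def)
  moreover have "ds \<noteq> []" using parties by auto
  ultimately show ?thesis using slocc_le_of_multiple[of "adj_ops Bs" ds \<psi>' c \<psi>] lenB zc z_def by simp
qed

text \<open>With \<open>\<psi> = N \<psi>'\<close> and \<open>N\<close> invertible
  (key step (3)), \<open>(N\<^sup>-\<^sup>1)\<^sup>\<dagger>\<close> maps \<open>\<psi>'\<^sup>\<perp>\<close> into \<open>\<psi>\<^sup>\<perp>\<close> and \<open>N\<^sup>\<dagger>\<close> maps it back.\<close>
lemma slocc_equiv_normals_le:
  assumes Phi': "\<Phi>' \<in> states (n # ds)" and g: "full_slices ds n \<Phi>"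
    and psi: "\<psi> \<in> states ds" "\<psi> \<noteq> 0" "orthogonal_to_slices ds n \<psi> \<Phi>"
    and psi': "\<psi>' \<in> states ds" "orthogonal_to_slices ds n \<psi>' \<Phi>'"
    and eq: "slocc_equiv ds \<psi> \<psi>'"
  shows "slocc_le (n # ds) \<Phi>' \<Phi>"
proof -
  obtain Ns Rs where NR: "length Ns = length ds" "length Rs = length ds" "loc_apply Ns ds \<psi>' = \<psi>"
    "\<forall>j<length ds. inverse_mats (ds ! j) (Ns ! j) (Rs ! j)"
    using slocc_equiv_invertible[of ds \<psi> \<psi>'] eq unfolding slocc_equiv_def by blast
  let ?aN = "adj_ops Ns" and ?aR = "adj_ops Rs"
  have aNaR: "loc_apply ?aN ds (loc_apply ?aR ds y) = y" if "y \<in> states ds" for y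
    by (rule loc_inv[OF _ that]) (use NR in \<open>simp add: adj_ops_def mat_mul_adj_mat id_mat_cnj\<close>)
  have RNpsi: "loc_apply Rs ds \<psi> = \<psi>'"
    unfolding NR(3)[symmetric] by (rule loc_inv[OF _ psi'(1)]) (use NR(4) in blast)
  have "slice \<Phi>' k \<in> VS.span (loc_apply ?aN ds ` slices n \<Phi>)" if k: "k < n" for k
  proof -
    define y where "y = slice \<Phi>' k"
    have ys: "y \<in> states ds" unfolding y_def by (rule slice_states[OF Phi'])
    have "inner_on (idx ds) \<psi> (loc_apply ?aR ds y) = inner_on (idx ds) \<psi>' y"
      using loc_adj[of ?aR ds \<psi> y] NR(2) RNpsi by simp
    also have "\<dots> = 0" using psi'(2) k unfolding orthogonal_to_slices_def y_def by blast
    finally have "loc_apply ?aR ds y \<in> VS.span (slices n \<Phi>)"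
      using full_slices_span[OF g psi loc_states] by blast
    then have "loc_apply ?aN ds (loc_apply ?aR ds y) \<in> VS.span (loc_apply ?aN ds ` slices n \<Phi>)"
      using VP.linear_span_image[OF loc_linear] by blast
    then show ?thesis using aNaR[OF ys] y_def by simp
  qed
  then have sub: "slices n \<Phi>' \<subseteq> VS.span (loc_apply ?aN ds ` slices n \<Phi>)" by (auto simp: slices_def)
  show ?thesis by (rule slocc_le_of_slices[OF Phi' _ sub]) (simp add: NR(1))
qed

text \<open>If \<open>\<Phi> = (A \<otimes> B)\<Psi>\<close>, the range of \<open>B\<close>
  contains \<open>\<psi>\<^sup>\<perp>\<close>, so \<open>B\<close> has an inverse \<open>R\<close>; the \<open>n\<close> independent vectors \<open>R \<Phi>\<^sub>i\<close> then span the
  span of the slices of \<open>\<Psi>\<close>, whence \<open>\<Psi> \<le> \<Phi>\<close>.\<close>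
lemma full_slices_maximal:
  assumes g: "full_slices ds n \<Phi>"
  shows "slocc_maximal (n # ds) \<Phi>"
  unfolding slocc_maximal_def
proof (intro conjI ballI impI)
  show Ps: "\<Phi> \<in> states (n # ds)" using g by (simp add: full_slices_def)
  fix \<Psi> assume Psi: "\<Psi> \<in> states (n # ds)" and le: "slocc_le (n # ds) \<Phi> \<Psi>"
  obtain Bs where lenB: "length Bs = length ds"
    and sub: "slices n \<Phi> \<subseteq> VS.span (loc_apply Bs ds ` slices n \<Psi>)"
    using slocc_le_slices[OF le] by blast
  obtain \<psi> where psi: "\<psi> \<in> states ds" "\<psi> \<noteq> 0" "orthogonal_to_slices ds n \<psi> \<Phi>"
    using full_slices_orthogonal_exists[OF g] by blast
  obtain Rs where Rs: "length Rs = length ds" "\<forall>j<length ds. inverse_mats (ds ! j) (Bs ! j) (Rs ! j)"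
    using hyperplane_range_invertible[OF parties dims lenB psi(1,2)] complement_in_range[OF g psi sub] by blast
  have RB: "loc_apply Rs ds (loc_apply Bs ds x) = x" and BR: "loc_apply Bs ds (loc_apply Rs ds x) = x"
    if "x \<in> states ds" for x
    using loc_inv[OF _ that] Rs by auto
  have span\<Psi>: "VS.span (slices n \<Psi>) \<subseteq> states ds"
    using span_subset_supported[OF slices_subset_supported[OF Psi]] states_supported by simp
  have span\<Phi>: "VS.span (slices n \<Phi>) \<subseteq> states ds"
    using span_subset_supported[OF slices_subset_supported[OF Ps]] states_supported by simp
  define Y where "Y = loc_apply Rs ds ` slices n \<Phi>"
  have Ysub: "Y \<subseteq> VS.span (slices n \<Psi>)"
  proof
    fix v assume "v \<in> Y"
    then obtain s where s: "s \<in> slices n \<Phi>" "v = loc_apply Rs ds s" unfolding Y_def by blast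
    obtain x where x: "x \<in> VS.span (slices n \<Psi>)" "s = loc_apply Bs ds x"
      using s(1) sub VP.linear_span_image[OF loc_linear] by blast
    show "v \<in> VS.span (slices n \<Psi>)" using x RB span\<Psi> s(2) by auto
  qed
  have inj: "inj_on (loc_apply Rs ds) (VS.span (slices n \<Phi>))"
    by (rule inj_onI) (metis BR span\<Phi> subsetD)
  have indY: "VS.independent Y" unfolding Y_def
    using VP.linear_independent_injective_image[OF loc_linear _ inj] g by (simp add: full_slices_def)
  have cY: "card Y = n" unfolding Y_def
    using card_image[OF inj_on_subset[OF inj VS.span_superset]] g by (simp add: full_slices_def)
  have "slices n \<Psi> \<subseteq> VS.span Y" using independent_card_spans[OF finite_slices Ysub indY] card_slices cY by simp
  then show "slocc_le (n # ds) \<Psi> \<Phi>" using slocc_le_of_slices[OF Psi Rs(1)] Y_def by simp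
qed

text \<open>Otherwise a basis \<open>b\<close> of the span of
  its slices has fewer than \<open>n\<close> elements; extending it to \<open>n\<close> independent vectors gives a state \<open>\<Psi>\<close>
  with full slices above \<open>\<Phi>\<close>, which cannot lie below \<open>\<Phi>\<close> for dimension reasons.\<close>
lemma maximal_full_slices:
  assumes M: "slocc_maximal (n # ds) \<Phi>"
  shows "full_slices ds n \<Phi>"
proof (rule ccontr)
  assume ng: "\<not> full_slices ds n \<Phi>"
  have Ps: "\<Phi> \<in> states (n # ds)" using M by (simp add: slocc_maximal_def)
  obtain b where b: "b \<subseteq> slices n \<Phi>" "VS.independent b" "slices n \<Phi> \<subseteq> VS.span b"
    using VS.maximal_independent_subset by blast
  have fb: "finite b" using b(1) finite_subset finite_slices by blast
  have cb: "card b < n"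
  proof (rule ccontr)
    assume "\<not> card b < n"
    then have "card b = card (slices n \<Phi>)" "card (slices n \<Phi>) = n"
      using card_mono[OF finite_slices b(1)] card_slices[of n \<Phi>] by linarith+
    then show False using card_subset_eq[OF finite_slices b(1)] ng b(2) Ps by (simp add: full_slices_def)
  qed
  have bsup: "b \<subseteq> supported (idx ds)" using b(1) slices_subset_supported[OF Ps] by blast
  obtain c where c: "b \<subseteq> c" "c \<subseteq> supported (idx ds)" "VS.independent c" "finite c" "card c = n"
    using independent_extend_card[OF finite_idx bsup b(2), of n] cb card_idx_eq by auto
  obtain \<Psi> where Psi: "full_slices ds n \<Psi>" "slices n \<Psi> = c"
    using full_slices_of_independent[of c ds n] c states_supported by blast
  have PsiS: "\<Psi> \<in> states (n # ds)" using Psi(1) by (simp add: full_slices_def)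
  have "loc_apply (id_ops (length ds)) ds x = x" if "x \<in> c" for x
    using that c(2) loc_id_ops states_supported by (metis subsetD)
  then have "loc_apply (id_ops (length ds)) ds ` slices n \<Psi> = c"
    unfolding Psi(2) by (simp cong: image_cong)
  then have "slocc_le (n # ds) \<Phi> \<Psi>"
    using slocc_le_of_slices[OF Ps length_id_ops] b(3) VS.span_mono[OF c(1)] by blast
  then have "slocc_le (n # ds) \<Psi> \<Phi>" using M PsiS by (simp add: slocc_maximal_def)
  then obtain Bs where sub: "slices n \<Psi> \<subseteq> VS.span (loc_apply Bs ds ` slices n \<Phi>)"
    using slocc_le_slices by blast
  have "loc_apply Bs ds ` slices n \<Phi> \<subseteq> loc_apply Bs ds ` VS.span b" using b(3) by (rule image_mono)
  also have "\<dots> = VS.span (loc_apply Bs ds ` b)" by (rule VP.linear_span_image[OF loc_linear, symmetric])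
  finally have "VS.span (loc_apply Bs ds ` slices n \<Phi>) \<subseteq> VS.span (loc_apply Bs ds ` b)"
    by (rule VS.span_minimal[OF _ VS.subspace_span])
  then have "c \<subseteq> VS.span (loc_apply Bs ds ` b)" using sub Psi(2) by blast
  from VS.independent_span_bound[OF finite_imageI[OF fb] c(3) this]
  have "card c \<le> card (loc_apply Bs ds ` b)" by simp
  also have "\<dots> \<le> card b" using card_image_le[OF fb] .
  finally show False using c(5) cb by simp
qed

text \<open>Every nonzero \<open>\<psi>\<close> is the normal of a maximal state: take a basis of \<open>\<psi>\<^sup>\<perp>\<close> as slices.\<close>
lemma exists_maximal_orthogonal:
  assumes psi: "\<psi> \<in> states ds" "\<psi> \<noteq> 0"
  shows "\<exists>\<Phi>. slocc_maximal (n # ds) \<Phi> \<and> orthogonal_to_slices ds n \<psi> \<Phi>"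
proof -
  have "\<psi> \<in> supported (idx ds)" using psi(1) states_supported by simp
  from orthogonal_complement_basis[OF finite_idx this psi(2)] obtain b where
    b: "b \<subseteq> supported (idx ds)" "VS.independent b" "finite b" "Suc (card b) = card (idx ds)"
      "\<forall>s\<in>b. inner_on (idx ds) \<psi> s = 0"
    by blast
  have "b \<subseteq> states ds" "card b = n" using b(1,4) states_supported card_idx_eq by simp_all
  then obtain \<Phi> where \<Phi>: "full_slices ds n \<Phi>" "slices n \<Phi> = b"
    using full_slices_of_independent b(2,3) by metis
  have "orthogonal_to_slices ds n \<psi> \<Phi>"
    using b(5) \<Phi>(2) by (auto simp: orthogonal_to_slices_def slices_def)
  then show ?thesis using full_slices_maximal[OF \<Phi>(1)] by blast
qed

lemma maximal_equiv_iff_normals_equiv: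
  assumes M: "slocc_maximal (n # ds) \<Phi>" "slocc_maximal (n # ds) \<Phi>'"
    and psi: "\<psi> \<in> states ds" "\<psi> \<noteq> 0" "orthogonal_to_slices ds n \<psi> \<Phi>"
    and psi': "\<psi>' \<in> states ds" "\<psi>' \<noteq> 0" "orthogonal_to_slices ds n \<psi>' \<Phi>'"
  shows "slocc_equiv (n # ds) \<Phi> \<Phi>' \<longleftrightarrow> slocc_equiv ds \<psi> \<psi>'"
proof
  have g: "full_slices ds n \<Phi>" "full_slices ds n \<Phi>'" using maximal_full_slices M by auto
  assume "slocc_equiv (n # ds) \<Phi> \<Phi>'"
  then show "slocc_equiv ds \<psi> \<psi>'" unfolding slocc_equiv_def
    using slocc_le_normals[OF g(1) g(2) _ psi psi'] slocc_le_normals[OF g(2) g(1) _ psi' psi] by blast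
next
  assume eq: "slocc_equiv ds \<psi> \<psi>'"
  have "\<Phi>' \<in> states (n # ds)" using M(2) by (simp add: slocc_maximal_def)
  then have "slocc_le (n # ds) \<Phi>' \<Phi>"
    using slocc_equiv_normals_le maximal_full_slices[OF M(1)] psi psi'(1,3) eq by blast
  then show "slocc_equiv (n # ds) \<Phi> \<Phi>'"
    using M by (simp add: slocc_maximal_def slocc_equiv_def)
qed

theorem maximal_classes_bij_normal_classes:
  "\<exists>F. bij_betw F (slocc_class (n # ds) ` {\<Phi>. slocc_maximal (n # ds) \<Phi>}) (slocc_class ds ` (states ds - {0}))
      \<and> (\<forall>\<Phi> \<psi>. \<Phi> \<in> {\<Phi>. slocc_maximal (n # ds) \<Phi>} \<longrightarrow> \<psi> \<in> states ds - {0} \<longrightarrow>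
             orthogonal_to_slices ds n \<psi> \<Phi> \<longrightarrow> F (slocc_class (n # ds) \<Phi>) = slocc_class ds \<psi>)"
proof (rule bij_betw_classes)
  fix \<Phi> assume "\<Phi> \<in> {\<Phi>. slocc_maximal (n # ds) \<Phi>}"
  then show "\<exists>\<psi>\<in>states ds - {0}. orthogonal_to_slices ds n \<psi> \<Phi>"
    using full_slices_orthogonal_exists maximal_full_slices by blast
next
  fix \<psi> assume "\<psi> \<in> states ds - {0}"
  then show "\<exists>\<Phi>\<in>{\<Phi>. slocc_maximal (n # ds) \<Phi>}. orthogonal_to_slices ds n \<psi> \<Phi>"
    using exists_maximal_orthogonal by blast
next
  fix \<Phi> \<Phi>' \<psi> \<psi>'
  assume "\<Phi> \<in> {\<Phi>. slocc_maximal (n # ds) \<Phi>}" "\<Phi>' \<in> {\<Phi>. slocc_maximal (n # ds) \<Phi>}"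
    "\<psi> \<in> states ds - {0}" "\<psi>' \<in> states ds - {0}"
    "orthogonal_to_slices ds n \<psi> \<Phi>" "orthogonal_to_slices ds n \<psi>' \<Phi>'"
  then show "slocc_class (n # ds) \<Phi> = slocc_class (n # ds) \<Phi>' \<longleftrightarrow> slocc_class ds \<psi> = slocc_class ds \<psi>'"
    using maximal_equiv_iff_normals_equiv slocc_class_eq_iff by (simp add: slocc_maximal_def)
qed

end

theorem mainTheorem10:
  fixes ds :: "nat list"
  assumes "length ds \<ge> 2"
    and "\<forall>d\<in>set ds. d \<ge> 2"
  shows "\<exists>F. bij_betw F
            (slocc_class ((prod_list ds - 1) # ds) ` {\<Phi>. slocc_maximal ((prod_list ds - 1) # ds) \<Phi>})
            (slocc_class ds ` (states ds - {\<lambda>_. 0}))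
          \<and> (\<forall>\<Phi> \<psi>. slocc_maximal ((prod_list ds - 1) # ds) \<Phi> \<longrightarrow> \<psi> \<in> states ds \<longrightarrow> \<psi> \<noteq> (\<lambda>_. 0) \<longrightarrow>
               (\<forall>i < prod_list ds - 1. (\<Sum>js\<in>idx ds. cnj (\<psi> js) * \<Phi> (i # js)) = 0) \<longrightarrow>
               F (slocc_class ((prod_list ds - 1) # ds) \<Phi>) = slocc_class ds \<psi>)"
proof -
  define n where "n = prod_list ds - 1"
  have "prod_list ds \<noteq> 0" using assms(2) by (auto simp: prod_list_zero_iff)
  then interpret complement_setting ds n using assms by unfold_locales (auto simp: n_def)
  have orth: "orthogonal_to_slices ds n \<psi> \<Phi> \<longleftrightarrow> (\<forall>i < n. (\<Sum>js\<in>idx ds. cnj (\<psi> js) * \<Phi> (i # js)) = 0)"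
    for \<psi> \<Phi> by (simp add: orthogonal_to_slices_def inner_on_def slice_def)
  have zero: "(\<lambda>_. 0 :: complex) = (0 :: tensor)" by (simp add: zero_fun_def)
  show ?thesis
    using maximal_classes_bij_normal_classes unfolding n_def[symmetric] orth[symmetric] zero by auto
qed

end
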